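(* Let $\Omega\subset\mathbb{C}$ be a bounded domain and $D=(\mu,\mathcal{A},\mathcal{B},\mathcal{F})\in\mathcal{BV}(\Omega)$ with $\mu\in C^{1,\alpha}$ for some $\alpha\in(0,1)$ and $\|\mu\|_\infty<1$. Let $\Phi:\Omega\to\Omega'$ be a $C^{2,\alpha}$ diffeomorphism solving $\Phi_{\bar z}=\mu\Phi_z$, with $\Omega'=\Phi(\Omega)$ bounded, and with $\mathcal{A}':=\overline{\Psi_\zeta}(\mathcal{A}\circ\Psi)$ H\"older continuous on $\overline{\Omega'}$, where $\Psi=\Phi^{-1}$. Then $D$ is gauge-diffeomorphism equivalent to a datum of the form $(0,0,\tilde{\mathcal{B}},\tilde{\mathcal{F}})\in\mathcal{BV}(\Omega')$, i.e. to a Vekua equation $w_{\bar\zeta}+\tilde{\mathcal{B}}\bar w=\tilde{\mathcal{F}}$ on $\Omega'$ with no $w$-coupling.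
   Context: A domain is an open connected subset of $\mathbb{C}$. $\mathcal{BV}(\Omega)$ is the set of quadruples $(\mu,\mathcal{A},\mathcal{B},\mathcal{F})$ of continuous complex functions on $\Omega$ with $|\mu|<1$ pointwise, encoding $w_{\bar z}-\mu w_z+\mathcal{A}w+\mathcal{B}\bar w=\mathcal{F}$. Gauge action: for a $C^1$ nowhere-vanishing $\phi$ on $\Omega$, $\phi\cdot(\mu,\mathcal{A},\mathcal{B},\mathcal{F})=(\mu,\ \mathcal{A}-\phi_{\bar z}/\phi+\mu\phi_z/\phi,\ \mathcal{B}\phi/\bar\phi,\ \phi\mathcal{F})$; $D_1\sim_g D_2$ iff $\phi\cdot D_1=D_2$ for some such $\phi$. Diffeomorphism action: for a $C^1$ bijection $\Phi:\Omega_1\to\Omega_2$ with $C^1$ inverse and $J=|\Phi_z|^2-|\Phi_{\bar z}|^2>0$, and $D\in\mathcal{BV}(\Omega_2)$, set $K=\Phi_z+(\mu\circ\Phi)\overline{\Phi_{\bar z}}$ and $\Phi^*D=((\Phi_{\bar z}+(\mu\circ\Phi)\overline{\Phi_z})/K,\ J(\mathcal{A}\circ\Phi)/K,\ J(\mathcal{B}\circ\Phi)/K,\ J(\mathcal{F}\circ\Phi)/K)$; $D_1\sim_d D_2$ iff $D_1=\Phi^*D_2$. Gauge-diffeomorphism equivalence $\sim$ is the equivalence relation generated by $\sim_g$ and $\sim_d$ (finite chains of such steps). *)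

theory Defs
  imports "HOL-Analysis.Analysis"
begin

definition domain :: "complex set \<Rightarrow> bool" where
  "domain S \<longleftrightarrow> open S \<and> connected S \<and> S \<noteq> {}"

definition dx :: "(complex \<Rightarrow> complex) \<Rightarrow> complex \<Rightarrow> complex" where
  "dx f z = frechet_derivative f (at z) 1"
definition dy :: "(complex \<Rightarrow> complex) \<Rightarrow> complex \<Rightarrow> complex" where
  "dy f z = frechet_derivative f (at z) \<i>"
definition dz :: "(complex \<Rightarrow> complex) \<Rightarrow> complex \<Rightarrow> complex" where
  "dz f z = (dx f z - \<i> * dy f z) / 2"
definition dzbar :: "(complex \<Rightarrow> complex) \<Rightarrow> complex \<Rightarrow> complex" where
  "dzbar f z = (dx f z + \<i> * dy f z) / 2"

definition C1_on :: "complex set \<Rightarrow> (complex \<Rightarrow> complex) \<Rightarrow> bool" where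
  "C1_on S f \<longleftrightarrow> (\<forall>z\<in>S. f differentiable (at z)) \<and>
     continuous_on S (dx f) \<and> continuous_on S (dy f)"

definition C2_on :: "complex set \<Rightarrow> (complex \<Rightarrow> complex) \<Rightarrow> bool" where
  "C2_on S f \<longleftrightarrow> C1_on S f \<and> C1_on S (dx f) \<and> C1_on S (dy f)"

definition holder_on :: "real \<Rightarrow> complex set \<Rightarrow> (complex \<Rightarrow> complex) \<Rightarrow> bool" where
  "holder_on a S f \<longleftrightarrow> (\<exists>C. \<forall>x\<in>S. \<forall>y\<in>S. cmod (f x - f y) \<le> C * cmod (x - y) powr a)"

definition C1a_on :: "real \<Rightarrow> complex set \<Rightarrow> (complex \<Rightarrow> complex) \<Rightarrow> bool" where
  "C1a_on a S f \<longleftrightarrow> C1_on S f \<and> holder_on a S (dx f) \<and> holder_on a S (dy f)"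

definition C2a_on :: "real \<Rightarrow> complex set \<Rightarrow> (complex \<Rightarrow> complex) \<Rightarrow> bool" where
  "C2a_on a S f \<longleftrightarrow> C2_on S f \<and>
     holder_on a S (dx (dx f)) \<and> holder_on a S (dy (dx f)) \<and>
     holder_on a S (dx (dy f)) \<and> holder_on a S (dy (dy f))"

type_synonym datum =
  "(complex \<Rightarrow> complex) \<times> (complex \<Rightarrow> complex) \<times> (complex \<Rightarrow> complex) \<times> (complex \<Rightarrow> complex)"

definition BV :: "complex set \<Rightarrow> datum \<Rightarrow> bool" where
  "BV S D \<longleftrightarrow> (case D of (\<mu>, A, B, F) \<Rightarrow>
     continuous_on S \<mu> \<and> continuous_on S A \<and> continuous_on S B \<and> continuous_on S F \<and>
     (\<forall>z\<in>S. cmod (\<mu> z) < 1))"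

definition eq_on :: "complex set \<Rightarrow> datum \<Rightarrow> datum \<Rightarrow> bool" where
  "eq_on S D1 D2 \<longleftrightarrow> (case D1 of (\<mu>1, A1, B1, F1) \<Rightarrow> case D2 of (\<mu>2, A2, B2, F2) \<Rightarrow>
     (\<forall>z\<in>S. \<mu>1 z = \<mu>2 z \<and> A1 z = A2 z \<and> B1 z = B2 z \<and> F1 z = F2 z))"

definition gauge_act :: "(complex \<Rightarrow> complex) \<Rightarrow> datum \<Rightarrow> datum" where
  "gauge_act \<phi> D = (case D of (\<mu>, A, B, F) \<Rightarrow>
     (\<mu>, \<lambda>z. A z - dzbar \<phi> z / \<phi> z + \<mu> z * dz \<phi> z / \<phi> z,
      \<lambda>z. B z * \<phi> z / cnj (\<phi> z), \<lambda>z. \<phi> z * F z))"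

definition gauge_rel :: "complex set \<Rightarrow> datum \<Rightarrow> datum \<Rightarrow> bool" where
  "gauge_rel S D1 D2 \<longleftrightarrow>
     (\<exists>\<phi>. C1_on S \<phi> \<and> (\<forall>z\<in>S. \<phi> z \<noteq> 0) \<and> eq_on S (gauge_act \<phi> D1) D2)"

definition jac :: "(complex \<Rightarrow> complex) \<Rightarrow> complex \<Rightarrow> real" where
  "jac \<Phi> z = (cmod (dz \<Phi> z))\<^sup>2 - (cmod (dzbar \<Phi> z))\<^sup>2"

definition pullback :: "(complex \<Rightarrow> complex) \<Rightarrow> datum \<Rightarrow> datum" where
  "pullback \<Phi> D = (case D of (\<mu>, A, B, F) \<Rightarrow>
     (let K = (\<lambda>z. dz \<Phi> z + \<mu> (\<Phi> z) * cnj (dzbar \<Phi> z)) in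
      (\<lambda>z. (dzbar \<Phi> z + \<mu> (\<Phi> z) * cnj (dz \<Phi> z)) / K z,
       \<lambda>z. of_real (jac \<Phi> z) * A (\<Phi> z) / K z,
       \<lambda>z. of_real (jac \<Phi> z) * B (\<Phi> z) / K z,
       \<lambda>z. of_real (jac \<Phi> z) * F (\<Phi> z) / K z)))"

definition admissible_diffeo :: "complex set \<Rightarrow> complex set \<Rightarrow> (complex \<Rightarrow> complex) \<Rightarrow> bool" where
  "admissible_diffeo S1 S2 \<Phi> \<longleftrightarrow> bij_betw \<Phi> S1 S2 \<and> C1_on S1 \<Phi> \<and>
     C1_on S2 (inv_into S1 \<Phi>) \<and> (\<forall>z\<in>S1. jac \<Phi> z > 0)"

definition diff_rel :: "complex set \<Rightarrow> datum \<Rightarrow> complex set \<Rightarrow> datum \<Rightarrow> bool" where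
  "diff_rel S1 D1 S2 D2 \<longleftrightarrow>
     (\<exists>\<Phi>. admissible_diffeo S1 S2 \<Phi> \<and> eq_on S1 D1 (pullback \<Phi> D2))"

definition gd_step :: "complex set \<times> datum \<Rightarrow> complex set \<times> datum \<Rightarrow> bool" where
  "gd_step P1 P2 \<longleftrightarrow> (case P1 of (S1, D1) \<Rightarrow> case P2 of (S2, D2) \<Rightarrow>
     domain S1 \<and> domain S2 \<and> BV S1 D1 \<and> BV S2 D2 \<and>
     ((S1 = S2 \<and> gauge_rel S1 D1 D2) \<or> diff_rel S1 D1 S2 D2))"

definition gd_equiv :: "complex set \<times> datum \<Rightarrow> complex set \<times> datum \<Rightarrow> bool" where
  "gd_equiv = equivclp gd_step"

end

theory Submission
  imports Defs
begin

(* Pulling the datum back along Phi, which solves the Beltrami equation Phi_zbar = mu Phi_z,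
   removes mu: on Omega' = Phi(Omega) it becomes (0, A', B', F') with A' = conj(Psi_zeta) A o Psi.
   A gauge phi then removes A' as soon as phi is nonvanishing and phi_zbar = A' phi; such a phi is
   exp (-g / c) for a Cauchy transform g of A', i.e. g_zbar = -c A'.
   To build g without singular integrals, A' is extended (McShane extension times a cutoff) to a
   compactly supported Hoelder function on C and convolved with kernels that equal 1/w outside the
   disc of radius 2^-n and are C^1 inside. Hoelder continuity, together with the oddness of the
   kernels' z-derivatives under rotation by i, makes the derivatives of these convolutions converge
   geometrically and uniformly, so their limit g is C^1 with the required g_zbar. *)

section \<open>Wirtinger calculus\<close>

lemma has_derivative_wirtinger:
  assumes "f differentiable (at z)"
  shows "(f has_derivative (\<lambda>v. dz f z * v + dzbar f z * cnj v)) (at z)"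
proof -
  let ?L = "frechet_derivative f (at z)"
  have d: "(f has_derivative ?L) (at z)" using assms frechet_derivative_works by blast
  have lin: "linear ?L" using d has_derivative_linear by blast
  have "?L v = dz f z * v + dzbar f z * cnj v" for v
  proof -
    have v: "v = Re v *\<^sub>R 1 + Im v *\<^sub>R \<i>" by (simp add: complex_eq_iff)
    have "?L v = Re v *\<^sub>R ?L 1 + Im v *\<^sub>R ?L \<i>"
      by (subst v) (simp add: linear_add[OF lin] linear_scale[OF lin])
    also have "\<dots> = dz f z * v + dzbar f z * cnj v"
      unfolding dz_def dzbar_def dx_def dy_def
      by (subst (3 4) v) (simp add: scaleR_conv_of_real field_simps)
    finally show ?thesis .
  qed
  then have "?L = (\<lambda>v. dz f z * v + dzbar f z * cnj v)" ..
  then show ?thesis using d by simp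
qed

lemma complex_real_linear_coeffs_unique:
  assumes "\<And>v. a * v + b * cnj v = a' * v + b' * cnj v"
  shows "a = a'" "b = b'"
proof -
  have sum: "a + b = a' + b'" using assms[of 1] by simp
  have "\<i> * (a - b) = \<i> * (a' - b')" using assms[of \<i>] by (simp add: algebra_simps)
  then have diff: "a - b = a' - b'" by simp
  have "a = ((a + b) + (a - b)) / 2" by simp
  also have "\<dots> = a'" unfolding sum diff by simp
  finally show "a = a'" .
  then show "b = b'" using sum by simp
qed

lemma wirtinger_of_has_derivative:
  assumes "(f has_derivative (\<lambda>v. a * v + b * cnj v)) (at z)"
  shows "dx f z = a + b" "dy f z = \<i> * a - \<i> * b" "dz f z = a" "dzbar f z = b"
proof -
  have L: "frechet_derivative f (at z) = (\<lambda>v. a * v + b * cnj v)"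
    using frechet_derivative_at[OF assms] by simp
  show dx: "dx f z = a + b" unfolding dx_def L by simp
  show dy: "dy f z = \<i> * a - \<i> * b" unfolding dy_def L by simp
  show "dz f z = a" unfolding dz_def dx dy by (simp add: algebra_simps)
  show "dzbar f z = b" unfolding dzbar_def dx dy by (simp add: algebra_simps)
qed

lemma C1_on_subset: "C1_on S f \<Longrightarrow> T \<subseteq> S \<Longrightarrow> C1_on T f"
  unfolding C1_on_def by (auto intro: continuous_on_subset)

lemma C1_on_imp_continuous_on: "C1_on S f \<Longrightarrow> continuous_on S f"
  unfolding C1_on_def
  by (intro continuous_at_imp_continuous_on) (auto intro: differentiable_imp_continuous_within)

lemma C1_on_imp_continuous_on_dz: "C1_on S f \<Longrightarrow> continuous_on S (dz f)"
  unfolding C1_on_def dz_def[abs_def] by (auto intro!: continuous_intros)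

lemma of_real_jac: "of_real (jac f z) = dz f z * cnj (dz f z) - dzbar f z * cnj (dzbar f z)"
  unfolding jac_def of_real_diff complex_norm_square ..

lemma beltrami_inverse_dz:
  assumes "open S" and z: "z \<in> S"
    and "\<Phi> differentiable (at z)" and "\<Psi> differentiable (at (\<Phi> z))"
    and inv: "\<And>x. x \<in> S \<Longrightarrow> \<Psi> (\<Phi> x) = x"
    and beltrami: "dzbar \<Phi> z = m * dz \<Phi> z" and m: "cmod m < 1"
  shows "dz \<Phi> z \<noteq> 0" "jac \<Phi> z > 0" "cnj (dz \<Psi> (\<Phi> z)) = dz \<Phi> z / of_real (jac \<Phi> z)"
proof -
  define a b p q where "a = dz \<Phi> z" and "b = dzbar \<Phi> z"
    and "p = dz \<Psi> (\<Phi> z)" and "q = dzbar \<Psi> (\<Phi> z)"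
  have "((\<lambda>x. \<Psi> (\<Phi> x)) has_derivative (\<lambda>v. p * (a * v + b * cnj v) + q * cnj (a * v + b * cnj v))) (at z)"
    using has_derivative_compose[OF has_derivative_wirtinger has_derivative_wirtinger] assms(3,4)
    unfolding a_def b_def p_def q_def by blast
  moreover have "((\<lambda>x. \<Psi> (\<Phi> x)) has_derivative (\<lambda>v. v)) (at z)"
    by (rule has_derivative_transform_within_open[OF has_derivative_ident \<open>open S\<close> z]) (simp add: inv)
  ultimately have "(\<lambda>v. p * (a * v + b * cnj v) + q * cnj (a * v + b * cnj v)) = (\<lambda>v. v)"
    by (rule has_derivative_unique)
  then have "(p * a + q * cnj b) * v + (p * b + q * cnj a) * cnj v = 1 * v + 0 * cnj v" for v
    by (drule_tac fun_cong[of _ _ v]) (simp add: algebra_simps)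
  note coeffs = complex_real_linear_coeffs_unique[OF this]
  have b: "b = m * a" unfolding a_def b_def by (rule beltrami)
  show a0: "dz \<Phi> z \<noteq> 0"
    using coeffs(1) b unfolding a_def by auto
  have "jac \<Phi> z = (cmod a)\<^sup>2 * (1 - (cmod m)\<^sup>2)"
    unfolding jac_def a_def[symmetric] b_def[symmetric] b by (simp add: norm_mult power_mult_distrib algebra_simps)
  moreover have "(cmod m)\<^sup>2 < 1" using m by (simp add: power_less_one_iff abs_square_less_1)
  ultimately show J: "jac \<Phi> z > 0" using a0 unfolding a_def by simp
  have "p * (a * cnj a - b * cnj b) = (p * a + q * cnj b) * cnj a - (p * b + q * cnj a) * cnj b"
    by (simp add: algebra_simps)
  then have "p * of_real (jac \<Phi> z) = cnj a"
    using coeffs unfolding of_real_jac a_def[symmetric] b_def[symmetric] by simp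
  then have "cnj p * of_real (jac \<Phi> z) = a"
    by (metis complex_cnj_cnj complex_cnj_mult complex_cnj_complex_of_real)
  then show "cnj (dz \<Psi> (\<Phi> z)) = dz \<Phi> z / of_real (jac \<Phi> z)"
    using J unfolding p_def[symmetric] a_def[symmetric] by (simp add: field_simps)
qed

lemma open_image_of_jac_pos:
  assumes "open S" and "continuous_on S \<Phi>"
    and diff: "\<And>z. z \<in> S \<Longrightarrow> \<Phi> differentiable (at z)"
    and jac: "\<And>z. z \<in> S \<Longrightarrow> jac \<Phi> z > 0"
  shows "open (\<Phi> ` S)"
proof -
  have "\<Phi> z \<in> interior (\<Phi> ` S)" if z: "z \<in> S" for z
  proof -
    define a b J where "a = dz \<Phi> z" and "b = dzbar \<Phi> z" and "J = (of_real (jac \<Phi> z) :: complex)"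
    have J0: "J \<noteq> 0" using jac[OF z] unfolding J_def by simp
    have J: "J = a * cnj a - b * cnj b" unfolding J_def a_def b_def by (rule of_real_jac)
    have cJ: "cnj J = J" unfolding J_def by simp
    \<comment> \<open>the real-linear inverse of \<open>v \<mapsto> a v + b conj v\<close>\<close>
    define g' where "g' w = (cnj a / J) * w + (- b / J) * cnj w" for w
    have "bounded_linear g'"
      unfolding g'_def[abs_def]
      by (rule bounded_linear_add[OF bounded_linear_mult_right
            bounded_linear_compose[OF bounded_linear_mult_right bounded_linear_cnj]])
    moreover have "(\<lambda>v. a * v + b * cnj v) \<circ> g' = id"
    proof
      fix w
      have "a * g' w + b * cnj (g' w) = (a * cnj a - b * cnj b) * w / J"
        unfolding g'_def using cJ J0 by (simp add: field_simps)
      then show "((\<lambda>v. a * v + b * cnj v) \<circ> g') w = id w" using J J0 by simp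
    qed
    ultimately show ?thesis
      using sussmann_open_mapping[OF \<open>open S\<close> \<open>continuous_on S \<Phi>\<close> z
          has_derivative_wirtinger[OF diff[OF z]] _ _ subset_refl] \<open>open S\<close> z
      unfolding a_def b_def by (simp add: interior_open)
  qed
  then show ?thesis
    by (metis interior_subset open_interior subsetI subset_antisym image_subset_iff)
qed

section \<open>A regularised Cauchy kernel\<close>

text \<open>The function \<open>s \<mapsto> 1/s\<close> on \<open>[e\<^sup>2, \<infinity>)\<close>, continued by its tangent line at \<open>e\<^sup>2\<close>.\<close>

definition recip_cutoff :: "real \<Rightarrow> real \<Rightarrow> real" where
  "recip_cutoff e s = 1 / max s (e\<^sup>2) + max (e\<^sup>2 - s) 0 / e ^ 4"

definition recip_cutoff_deriv :: "real \<Rightarrow> real \<Rightarrow> real" where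
  "recip_cutoff_deriv e s = - 1 / (max s (e\<^sup>2))\<^sup>2"

lemma recip_cutoff_ge: "e\<^sup>2 \<le> s \<Longrightarrow> recip_cutoff e s = 1 / s"
  by (simp add: recip_cutoff_def)

lemma recip_cutoff_less: "e > 0 \<Longrightarrow> s < e\<^sup>2 \<Longrightarrow> recip_cutoff e s = (2 * e\<^sup>2 - s) / e ^ 4"
  by (simp add: recip_cutoff_def field_simps power2_eq_square power4_eq_xxxx)

lemma recip_cutoff_deriv_ge: "e\<^sup>2 \<le> s \<Longrightarrow> recip_cutoff_deriv e s = - 1 / s\<^sup>2"
  by (simp add: recip_cutoff_deriv_def)

lemma recip_cutoff_deriv_less: "s < e\<^sup>2 \<Longrightarrow> recip_cutoff_deriv e s = - 1 / e ^ 4"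
  by (simp add: recip_cutoff_deriv_def power2_eq_square power4_eq_xxxx)

lemma has_real_derivative_recip_cutoff:
  assumes e: "e > 0"
  shows "(recip_cutoff e has_real_derivative recip_cutoff_deriv e s) (at s)"
proof -
  have e2: "e\<^sup>2 > 0" using e by simp
  consider "s > e\<^sup>2" | "s < e\<^sup>2" | "s = e\<^sup>2" by linarith
  then show ?thesis
  proof cases
    case 1
    have "eventually (\<lambda>x. recip_cutoff e x = 1 / x) (nhds s)"
      using eventually_nhds_in_open[of "{e\<^sup>2<..}" s] 1
      by (auto simp: recip_cutoff_def elim!: eventually_mono)
    moreover have "((\<lambda>x. 1 / x) has_real_derivative - 1 / s\<^sup>2) (at s)"
      using 1 e2 by (auto intro!: derivative_eq_intros simp: power2_eq_square field_simps)
    ultimately show ?thesis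
      using 1 by (subst DERIV_cong_ev[OF refl]) (auto simp: recip_cutoff_deriv_def)
  next
    case 2
    have "eventually (\<lambda>x. recip_cutoff e x = 1 / e\<^sup>2 + (e\<^sup>2 - x) / e ^ 4) (nhds s)"
      using eventually_nhds_in_open[of "{..<e\<^sup>2}" s] 2
      by (auto simp: recip_cutoff_def elim!: eventually_mono)
    moreover have "((\<lambda>x. 1 / e\<^sup>2 + (e\<^sup>2 - x) / e ^ 4) has_real_derivative - 1 / e ^ 4) (at s)"
      using e2 by (auto intro!: derivative_eq_intros) (simp add: divide_simps)
    ultimately show ?thesis
      using 2 by (subst DERIV_cong_ev[OF refl]) (auto simp: recip_cutoff_deriv_less)
  next
    case 3
    \<comment> \<open>both one-sided difference quotients are captured by a single formula\<close>
    have quotient: "(recip_cutoff e (s + h) - recip_cutoff e s) / h = - 1 / (e\<^sup>2 * max (e\<^sup>2) (e\<^sup>2 + h))"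
      if "h \<noteq> 0" for h
    proof (cases "h > 0")
      case True
      have "(1 / (t + h) - 1 / t) / h = - 1 / (t * max t (t + h))" if "t > 0" for t
        using that True by (simp add: max_def divide_simps)
      then show ?thesis
        using e2 True by (simp add: 3 recip_cutoff_ge)
    next
      case False
      then have "h < 0" using that by simp
      then show ?thesis
        using e e2 by (simp add: 3 recip_cutoff_ge recip_cutoff_less max_def field_simps power2_eq_square power4_eq_xxxx)
    qed
    have "((\<lambda>h. - 1 / (e\<^sup>2 * max (e\<^sup>2) (e\<^sup>2 + h))) \<longlongrightarrow> - 1 / (e\<^sup>2 * max (e\<^sup>2) (e\<^sup>2 + 0))) (at 0)"
      using e2 by (intro tendsto_intros) auto
    then have "((\<lambda>h. - 1 / (e\<^sup>2 * max (e\<^sup>2) (e\<^sup>2 + h))) \<longlongrightarrow> - 1 / (e\<^sup>2 * e\<^sup>2)) (at 0)"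
      by simp
    then have "((\<lambda>h. (recip_cutoff e (s + h) - recip_cutoff e s) / h) \<longlongrightarrow> - 1 / (e\<^sup>2 * e\<^sup>2)) (at 0)"
      by (rule Lim_transform_eventually) (auto simp: eventually_at_filter quotient)
    then show ?thesis unfolding DERIV_def 3 by (simp add: recip_cutoff_deriv_def power2_eq_square)
  qed
qed

lemma continuous_on_recip_cutoff: "e > 0 \<Longrightarrow> continuous_on UNIV (recip_cutoff e)"
  unfolding recip_cutoff_def by (intro continuous_intros) (auto simp: max_def)

lemma continuous_on_recip_cutoff_deriv: "e > 0 \<Longrightarrow> continuous_on UNIV (recip_cutoff_deriv e)"
  unfolding recip_cutoff_deriv_def by (intro continuous_intros) (auto simp: max_def)

text \<open>\<open>reg_kernel e w = 1/w\<close> for \<open>|w| \<ge> e\<close>; the next two definitions are its Wirtinger derivatives.\<close>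

definition reg_kernel :: "real \<Rightarrow> complex \<Rightarrow> complex" where
  "reg_kernel e w = cnj w * of_real (recip_cutoff e ((cmod w)\<^sup>2))"

definition reg_kernel_dz :: "real \<Rightarrow> complex \<Rightarrow> complex" where
  "reg_kernel_dz e w = (cnj w)\<^sup>2 * of_real (recip_cutoff_deriv e ((cmod w)\<^sup>2))"

definition reg_kernel_dzbar :: "real \<Rightarrow> complex \<Rightarrow> real" where
  "reg_kernel_dzbar e w = recip_cutoff e ((cmod w)\<^sup>2) + (cmod w)\<^sup>2 * recip_cutoff_deriv e ((cmod w)\<^sup>2)"

lemma has_derivative_reg_kernel:
  assumes e: "e > 0"
  shows "(reg_kernel e has_derivative (\<lambda>v. reg_kernel_dz e w * v + of_real (reg_kernel_dzbar e w) * cnj v)) (at w)"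
proof -
  have "((\<lambda>w. (Re w)\<^sup>2 + (Im w)\<^sup>2) has_derivative (\<lambda>v. 2 * (Re w * Re v + Im w * Im v))) (at w)"
    by (auto intro!: derivative_eq_intros simp: algebra_simps)
  then have "((\<lambda>w. (cmod w)\<^sup>2) has_derivative (\<lambda>v. 2 * (Re w * Re v + Im w * Im v))) (at w)"
    by (simp add: cmod_power2)
  from DERIV_compose_FDERIV[OF has_real_derivative_recip_cutoff[OF e] this]
  have "((\<lambda>w. of_real (recip_cutoff e ((cmod w)\<^sup>2)) :: complex) has_derivative
      (\<lambda>v. of_real (2 * (Re w * Re v + Im w * Im v) * recip_cutoff_deriv e ((cmod w)\<^sup>2)))) (at w)"
    by (rule has_derivative_of_real)
  from has_derivative_mult[OF has_derivative_cnj[OF has_derivative_ident] this]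
  have "(reg_kernel e has_derivative (\<lambda>v. cnj w * of_real (2 * (Re w * Re v + Im w * Im v)
      * recip_cutoff_deriv e ((cmod w)\<^sup>2)) + cnj v * of_real (recip_cutoff e ((cmod w)\<^sup>2)))) (at w)"
    unfolding reg_kernel_def[abs_def] by simp
  moreover have "cnj w * of_real (2 * (Re w * Re v + Im w * Im v) * H) + cnj v * of_real G
      = (cnj w)\<^sup>2 * of_real H * v + of_real (G + ((Re w)\<^sup>2 + (Im w)\<^sup>2) * H) * cnj v" for H G v
    by (simp add: complex_eq_iff power2_eq_square algebra_simps)
  ultimately show ?thesis
    unfolding reg_kernel_dz_def reg_kernel_dzbar_def cmod_power2 by simp
qed

lemma reg_kernel_outside: "e > 0 \<Longrightarrow> e \<le> cmod w \<Longrightarrow> reg_kernel e w = cnj w * of_real (1 / (cmod w)\<^sup>2)"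
  unfolding reg_kernel_def by (subst recip_cutoff_ge) (auto intro: power_mono)

lemma reg_kernel_dz_outside: "e > 0 \<Longrightarrow> e \<le> cmod w \<Longrightarrow> reg_kernel_dz e w = (cnj w)\<^sup>2 * of_real (- 1 / ((cmod w)\<^sup>2)\<^sup>2)"
  unfolding reg_kernel_dz_def by (subst recip_cutoff_deriv_ge) (auto intro: power_mono)

lemma reg_kernel_dzbar_outside: "e > 0 \<Longrightarrow> e \<le> cmod w \<Longrightarrow> reg_kernel_dzbar e w = 0"
  using power_mono[of e "cmod w" 2]
  by (simp add: reg_kernel_dzbar_def recip_cutoff_ge recip_cutoff_deriv_ge power2_eq_square)

lemma reg_kernel_dzbar_inside:
  "e > 0 \<Longrightarrow> cmod w < e \<Longrightarrow> reg_kernel_dzbar e w = 2 * (e\<^sup>2 - (cmod w)\<^sup>2) / e ^ 4"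
  using power_strict_mono[of "cmod w" e 2]
  by (simp add: reg_kernel_dzbar_def recip_cutoff_less recip_cutoff_deriv_less field_simps)

lemma reg_kernel_dzbar_nonneg: "e > 0 \<Longrightarrow> 0 \<le> reg_kernel_dzbar e w"
  by (cases "cmod w < e") (auto simp: reg_kernel_dzbar_inside reg_kernel_dzbar_outside power_mono)

lemma reg_kernel_dzbar_le: "e > 0 \<Longrightarrow> reg_kernel_dzbar e w \<le> 2 / e\<^sup>2"
proof (cases "cmod w < e")
  case True
  assume e: "e > 0"
  have "2 * (e\<^sup>2 - (cmod w)\<^sup>2) / e ^ 4 \<le> 2 * e\<^sup>2 / e ^ 4"
    using e by (intro divide_right_mono) auto
  also have "\<dots> = 2 / e\<^sup>2" using e by (simp add: field_simps power2_eq_square power4_eq_xxxx)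
  finally show ?thesis using True e by (simp add: reg_kernel_dzbar_inside)
qed (auto simp: reg_kernel_dzbar_outside)

lemma reg_kernel_dzbar_scale: "e > 0 \<Longrightarrow> reg_kernel_dzbar e w = reg_kernel_dzbar 1 (w /\<^sub>R e) / e\<^sup>2"
  by (cases "cmod w < e")
    (simp_all add: reg_kernel_dzbar_inside reg_kernel_dzbar_outside field_simps power2_eq_square power4_eq_xxxx)

lemma norm_reg_kernel_dz_le: "e > 0 \<Longrightarrow> cmod (reg_kernel_dz e w) \<le> 1 / e\<^sup>2"
proof -
  assume e: "e > 0"
  let ?m = "max ((cmod w)\<^sup>2) (e\<^sup>2)"
  have m: "?m > 0" "(cmod w)\<^sup>2 \<le> ?m" "e\<^sup>2 \<le> ?m" using e by (auto simp: less_max_iff_disj)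
  have "cmod (reg_kernel_dz e w) = (cmod w)\<^sup>2 * \<bar>recip_cutoff_deriv e ((cmod w)\<^sup>2)\<bar>"
    by (simp only: reg_kernel_dz_def norm_mult norm_power complex_mod_cnj norm_of_real)
  also have "\<dots> = (cmod w)\<^sup>2 / ?m\<^sup>2"
    by (simp add: recip_cutoff_deriv_def)
  also have "\<dots> \<le> ?m / ?m\<^sup>2" using m by (intro divide_right_mono) auto
  also have "\<dots> = 1 / ?m" using m by (simp add: power2_eq_square)
  also have "\<dots> \<le> 1 / e\<^sup>2" using m e by (intro divide_left_mono) auto
  finally show ?thesis .
qed

lemma norm_reg_kernel_le: "e > 0 \<Longrightarrow> cmod (reg_kernel e w) \<le> 2 / e"
proof (cases "cmod w < e")
  case True
  assume e: "e > 0"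
  have s: "(cmod w)\<^sup>2 < e\<^sup>2" using e True by (simp add: power_strict_mono)
  have "0 \<le> 2 * e\<^sup>2 - (cmod w)\<^sup>2" using s zero_le_power2[of e] by linarith
  then have q: "0 \<le> (2 * e\<^sup>2 - (cmod w)\<^sup>2) / e ^ 4" by simp
  have "cmod (reg_kernel e w) = cmod w * \<bar>(2 * e\<^sup>2 - (cmod w)\<^sup>2) / e ^ 4\<bar>"
    by (simp only: reg_kernel_def norm_mult complex_mod_cnj norm_of_real recip_cutoff_less[OF e s])
  also have "\<dots> = cmod w * ((2 * e\<^sup>2 - (cmod w)\<^sup>2) / e ^ 4)"
    by (simp only: abs_of_nonneg[OF q])
  also have "\<dots> \<le> e * (2 * e\<^sup>2 / e ^ 4)"
    using True e q by (intro mult_mono divide_right_mono) auto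
  also have "\<dots> = 2 / e" using e by (simp add: field_simps power2_eq_square power4_eq_xxxx)
  finally show ?thesis .
next
  case False
  assume e: "e > 0"
  then have w: "e \<le> cmod w" "cmod w > 0" using False by auto
  then have "cmod (reg_kernel e w) = cmod w * (1 / (cmod w)\<^sup>2)" using e
    by (simp only: reg_kernel_outside norm_mult complex_mod_cnj norm_of_real) simp
  also have "\<dots> = 1 / cmod w" using w by (simp add: power2_eq_square)
  also have "\<dots> \<le> 2 / e" using w e by (simp add: frac_le)
  finally show ?thesis .
qed

lemma reg_kernel_dz_rotate: "reg_kernel_dz e (\<i> * w) = - reg_kernel_dz e w"
  by (simp add: reg_kernel_dz_def norm_mult power_mult_distrib)

lemma continuous_on_reg_kernel: "e > 0 \<Longrightarrow> continuous_on UNIV (reg_kernel e)"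
  unfolding reg_kernel_def
  by (intro continuous_intros continuous_on_compose2[OF continuous_on_recip_cutoff]) auto

lemma continuous_on_reg_kernel_dz: "e > 0 \<Longrightarrow> continuous_on UNIV (reg_kernel_dz e)"
  unfolding reg_kernel_dz_def
  by (intro continuous_intros continuous_on_compose2[OF continuous_on_recip_cutoff_deriv]) auto

lemma continuous_on_reg_kernel_dzbar: "e > 0 \<Longrightarrow> continuous_on UNIV (reg_kernel_dzbar e)"
  unfolding reg_kernel_dzbar_def
  by (intro continuous_intros continuous_on_compose2[OF continuous_on_recip_cutoff_deriv]
      continuous_on_compose2[OF continuous_on_recip_cutoff]) auto

definition square :: "complex \<Rightarrow> real \<Rightarrow> complex set" where
  "square c r = cbox (c - of_real r * (1 + \<i>)) (c + of_real r * (1 + \<i>))"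

lemma square_0: "square 0 r = cbox (- (of_real r * (1 + \<i>))) (of_real r * (1 + \<i>))"
  by (simp add: square_def)

lemma mem_square: "w \<in> square c r \<longleftrightarrow> \<bar>Re w - Re c\<bar> \<le> r \<and> \<bar>Im w - Im c\<bar> \<le> r"
  unfolding square_def in_cbox_complex_iff by auto

lemma content_cbox_complex:
  "Henstock_Kurzweil_Integration.content (cbox a b) = (if Re a \<le> Re b \<and> Im a \<le> Im b then (Re b - Re a) * (Im b - Im a) else 0)"
  unfolding content_cbox_cases by (simp add: Basis_complex_def)

lemma content_square: "r \<ge> 0 \<Longrightarrow> Henstock_Kurzweil_Integration.content (square c r) = 4 * r\<^sup>2"
  unfolding square_def content_cbox_complex by (simp add: power2_eq_square)

lemma ball_subset_square: "ball c r \<subseteq> square c r"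
proof
  fix w assume "w \<in> ball c r"
  then have "cmod (w - c) < r" by (simp add: dist_norm norm_minus_commute)
  then show "w \<in> square c r"
    using abs_Re_le_cmod[of "w - c"] abs_Im_le_cmod[of "w - c"] unfolding mem_square by auto
qed

lemma integrable_on_square:
  fixes f :: "complex \<Rightarrow> 'a::banach"
  shows "continuous_on UNIV f \<Longrightarrow> f integrable_on square c r"
  unfolding square_def by (rule integrable_continuous, rule continuous_on_subset) auto

lemma integral_UNIV_eq_square:
  fixes f :: "complex \<Rightarrow> complex"
  assumes "continuous_on UNIV f" and "\<And>\<zeta>. \<zeta> \<notin> square c r \<Longrightarrow> f \<zeta> = 0"
  shows "f integrable_on UNIV" "integral UNIV f = integral (square c r) f"
proof -
  have "(f has_integral integral (square c r) f) UNIV"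
    using integrable_on_square[OF assms(1)]
    by (rule has_integral_on_superset[OF integrable_integral]) (use assms(2) in auto)
  then show "f integrable_on UNIV" "integral UNIV f = integral (square c r) f"
    by (auto intro: integral_unique)
qed

lemma integral_square_translate:
  fixes f :: "complex \<Rightarrow> complex"
  assumes "continuous_on UNIV f"
  shows "integral (square z r) (\<lambda>\<zeta>. f (\<zeta> - z)) = integral (square 0 r) f"
proof -
  let ?v = "of_real r * (1 + \<i>)"
  have "(f has_integral integral (square 0 r) f) (cbox (- ?v) ?v)"
    using integrable_integral[OF integrable_on_square[OF assms, of 0 r]] unfolding square_0 .
  then have "((\<lambda>\<zeta>. f (\<zeta> - z)) has_integral integral (square 0 r) f) (cbox (- ?v + z) (?v + z))"
    by (subst has_integral_shift_cbox_iff[symmetric]) (simp add: o_def)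
  then show ?thesis
    unfolding square_def by (simp add: algebra_simps integral_unique)
qed

lemma image_mult_i_cbox:
  "(\<lambda>x. \<i> * x) ` cbox u v = cbox (Complex (- Im v) (Re u)) (Complex (- Im u) (Re v))"
proof (rule set_eqI, rule iffI)
  fix z assume "z \<in> cbox (Complex (- Im v) (Re u)) (Complex (- Im u) (Re v))"
  then have "- \<i> * z \<in> cbox u v" by (auto simp: in_cbox_complex_iff)
  then show "z \<in> (\<lambda>x. \<i> * x) ` cbox u v" by (rule rev_image_eqI) simp
qed (auto simp: in_cbox_complex_iff)

lemma image_mult_neg_i_cbox:
  "(\<lambda>x. - \<i> * x) ` cbox u v = cbox (Complex (Im u) (- Re v)) (Complex (Im v) (- Re u))"
proof (rule set_eqI, rule iffI)
  fix z assume "z \<in> cbox (Complex (Im u) (- Re v)) (Complex (Im v) (- Re u))"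
  then have "\<i> * z \<in> cbox u v" by (auto simp: in_cbox_complex_iff)
  then show "z \<in> (\<lambda>x. - \<i> * x) ` cbox u v" by (rule rev_image_eqI) simp
qed (auto simp: in_cbox_complex_iff)

lemma integral_square_rotation_odd:
  fixes d :: "complex \<Rightarrow> complex"
  assumes cont: "continuous_on UNIV d" and odd: "\<And>w. d (\<i> * w) = - d w"
  shows "integral (square 0 r) d = 0"
proof -
  let ?I = "integral (square 0 r) d" and ?v = "of_real r * (1 + \<i>)"
  have I: "(d has_integral ?I) (cbox (- ?v) ?v)"
    using integrable_integral[OF integrable_on_square[OF cont, of 0 r]] unfolding square_0 .
  have "((\<lambda>x. d (\<i> * x)) has_integral (1 / 1) *\<^sub>R ?I) ((\<lambda>x. - \<i> * x) ` cbox (- ?v) ?v)"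
  proof (rule has_integral_twiddle[where g = "\<lambda>x. \<i> * x" and h = "\<lambda>x. - \<i> * x", OF _ _ _ _ _ _ _ I])
    show "\<exists>w z. (\<lambda>x. \<i> * x) ` cbox u v = cbox w z" "\<exists>w z. (\<lambda>x. - \<i> * x) ` cbox u v = cbox w z" for u v
      using image_mult_i_cbox image_mult_neg_i_cbox by blast+
    show "Henstock_Kurzweil_Integration.content ((\<lambda>x. \<i> * x) ` cbox u v) = 1 * Henstock_Kurzweil_Integration.content (cbox u v)" for u v
      unfolding image_mult_i_cbox content_cbox_complex by auto
    show "continuous (at x) (\<lambda>x. \<i> * x)" for x by (intro continuous_intros)
  qed auto
  moreover have "(\<lambda>x. - \<i> * x) ` cbox (- ?v) ?v = square 0 r"
    unfolding image_mult_neg_i_cbox by (auto simp: square_def in_cbox_complex_iff)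
  ultimately have "((\<lambda>x. - d x) has_integral ?I) (square 0 r)"
    by (simp add: odd)
  from has_integral_neg[OF this] have "(d has_integral - ?I) (square 0 r)"
    by simp
  then have "- ?I = ?I"
    using I unfolding square_0 by (rule has_integral_unique)
  then show ?thesis by simp
qed

text \<open>The mass of \<open>reg_kernel_dzbar\<close> (it equals \<open>\<pi>\<close>, but only its positivity matters).\<close>

definition kernel_mass :: real where
  "kernel_mass = integral (square 0 1) (reg_kernel_dzbar 1)"

lemma has_integral_reg_kernel_dzbar:
  assumes e: "e > 0"
  shows "(reg_kernel_dzbar e has_integral kernel_mass) (square 0 e)"
proof -
  have "(0::complex) \<in> cbox (- (1 + \<i>)) (1 + \<i>)" by (simp add: in_cbox_complex_iff)
  then have "(\<lambda>x. e *\<^sub>R x) ` cbox (- (1 + \<i>)) (1 + \<i>) = cbox (e *\<^sub>R - (1 + \<i>)) (e *\<^sub>R (1 + \<i>))"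
    using e by (subst image_smult_cbox) auto
  moreover have "e *\<^sub>R - (1 + \<i>) = - (of_real e * (1 + \<i>))" "e *\<^sub>R (1 + \<i>) = of_real e * (1 + \<i>)"
    by (simp_all add: scaleR_conv_of_real algebra_simps)
  ultimately have image: "(\<lambda>x. e *\<^sub>R x) ` cbox (- (1 + \<i>)) (1 + \<i>) = square 0 e"
    unfolding square_0 by simp
  have "(reg_kernel_dzbar 1 has_integral kernel_mass) (cbox (- (1 + \<i>)) (1 + \<i>))"
    using integrable_integral[OF integrable_on_square[OF continuous_on_reg_kernel_dzbar], of 1 0 1]
    unfolding kernel_mass_def square_0 by simp
  from has_integral_affinity[OF this, of "1 / e" 0]
  have "((\<lambda>x. reg_kernel_dzbar 1 (x /\<^sub>R e)) has_integral e\<^sup>2 * kernel_mass) (square 0 e)"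
    using e image by (simp add: field_simps)
  then have "((\<lambda>x. reg_kernel_dzbar 1 (x /\<^sub>R e) / e\<^sup>2) has_integral kernel_mass) (square 0 e)"
    using has_integral_divide[of _ "e\<^sup>2 * kernel_mass" _ "e\<^sup>2"] e by simp
  moreover have "reg_kernel_dzbar e = (\<lambda>x. reg_kernel_dzbar 1 (x /\<^sub>R e) / e\<^sup>2)"
    using reg_kernel_dzbar_scale[OF e] by blast
  ultimately show ?thesis by simp
qed

lemma kernel_mass_pos: "kernel_mass > 0"
proof -
  have "1 = integral (square 0 (1/2)) (\<lambda>x. 1::real)"
    by (simp add: square_def content_cbox_complex)
  also have "\<dots> \<le> integral (square 0 (1/2)) (reg_kernel_dzbar 1)"
  proof (rule integral_le)
    fix x assume "x \<in> square 0 (1/2)"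
    then have "(Re x)\<^sup>2 \<le> (1/2)\<^sup>2" "(Im x)\<^sup>2 \<le> (1/2)\<^sup>2"
      unfolding mem_square by (simp_all add: abs_le_square_iff[symmetric])
    then have n: "(cmod x)\<^sup>2 \<le> 1/2" using cmod_power2[of x] by (simp add: power2_eq_square)
    then have "cmod x < 1" using power_less_imp_less_base[of "cmod x" 2 1] by simp
    then show "1 \<le> reg_kernel_dzbar 1 x" using n by (simp add: reg_kernel_dzbar_inside)
  qed (auto intro!: integrable_on_square continuous_on_reg_kernel_dzbar)
  also have "\<dots> \<le> integral (square 0 1) (reg_kernel_dzbar 1)"
    using reg_kernel_dzbar_nonneg[of 1]
    by (intro integral_subset_le) (auto simp: mem_square integrable_on_square continuous_on_reg_kernel_dzbar)
  finally show ?thesis unfolding kernel_mass_def by simp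
qed

section \<open>Hoelder continuous functions\<close>

lemma geometric_increments_convergent:
  fixes f :: "nat \<Rightarrow> 'a::banach"
  assumes inc: "\<And>n. norm (f n - f (Suc n)) \<le> K * q ^ n" and q: "0 \<le> q" "q < 1"
  shows "convergent f" "norm (f n - lim f) \<le> K * q ^ n / (1 - q)"
proof -
  define \<delta> where "\<delta> j = f j - f (Suc j)" for j
  have geo: "(\<lambda>j. (K * q ^ n) * q ^ j) sums ((K * q ^ n) * (1 / (1 - q)))" for n
    using q by (intro sums_mult geometric_sums) auto
  have shift: "(\<lambda>j. K * q ^ (j + n)) = (\<lambda>j. (K * q ^ n) * q ^ j)" for n
    by (simp add: power_add mult_ac)
  have "summable \<delta>"
    using inc geo[of 0] unfolding \<delta>_def by (intro summable_comparison_test[OF _ sums_summable]) auto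
  moreover have fn: "f n = f 0 - (\<Sum>j<n. \<delta> j)" for n
    unfolding \<delta>_def sum_lessThan_telescope' by simp
  ultimately have "f \<longlonglongrightarrow> f 0 - suminf \<delta>"
    by (subst fn[abs_def]) (intro tendsto_diff tendsto_const summable_LIMSEQ)
  then show "convergent f" by (auto simp: convergent_def)
  have L: "lim f = f 0 - suminf \<delta>" using \<open>f \<longlonglongrightarrow> _\<close> by (rule limI)
  have "f n - lim f = (\<Sum>j. \<delta> (j + n))"
    using suminf_split_initial_segment[OF \<open>summable \<delta>\<close>, of n] unfolding L fn[of n] by (simp add: algebra_simps)
  also have "norm \<dots> \<le> (\<Sum>j. K * q ^ (j + n))"
  proof (rule norm_suminf_le)
    show "norm (\<delta> (j + n)) \<le> K * q ^ (j + n)" for j using inc unfolding \<delta>_def .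
    show "summable (\<lambda>j. K * q ^ (j + n))" unfolding shift using geo by (rule sums_summable)
  qed
  also have "\<dots> = K * q ^ n / (1 - q)"
    unfolding shift using geo[of n] by (simp add: sums_iff)
  finally show "norm (f n - lim f) \<le> K * q ^ n / (1 - q)" .
qed

lemma powr_add_le_add_powr:
  fixes a b \<beta> :: real
  assumes "0 \<le> a" "0 \<le> b" "0 < \<beta>" "\<beta> \<le> 1"
  shows "(a + b) powr \<beta> \<le> a powr \<beta> + b powr \<beta>"
proof (cases "a + b = 0")
  case False
  define s t where "s = a + b" and "t = a / (a + b)"
  have s: "s > 0" and t: "0 \<le> t" "t \<le> 1" using False assms unfolding s_def t_def by auto
  have a: "a = s * t" and b: "b = s * (1 - t)" using s unfolding t_def s_def by (auto simp: field_simps)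
  have "t \<le> t powr \<beta>" "1 - t \<le> (1 - t) powr \<beta>"
    using powr_mono'[OF assms(4), of t] powr_mono'[OF assms(4), of "1 - t"] t by auto
  then have "s powr \<beta> * 1 \<le> s powr \<beta> * (t powr \<beta> + (1 - t) powr \<beta>)"
    by (intro mult_left_mono) auto
  moreover have "s * t + s * (1 - t) = s" by (simp add: algebra_simps)
  ultimately show ?thesis unfolding s_def[symmetric] a b
    using t s by (simp add: powr_mult distrib_left)
qed (use assms in simp)

text \<open>McShane's extension \<open>v x = inf\<^sub>y\<^sub>\<in>\<^sub>U (u y + C |x - y|\<^sup>\<beta>)\<close>; it stays Hoelder because
  \<open>|x - y|\<^sup>\<beta>\<close> is subadditive.\<close>

lemma holder_extension_real:
  fixes u :: "complex \<Rightarrow> real"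
  assumes U: "U \<noteq> {}" "bounded U"
    and hol: "\<And>x y. x \<in> U \<Longrightarrow> y \<in> U \<Longrightarrow> \<bar>u x - u y\<bar> \<le> C * cmod (x - y) powr \<beta>"
    and \<beta>: "0 < \<beta>" "\<beta> \<le> 1" and C: "0 \<le> C"
  shows "\<exists>v. (\<forall>x\<in>U. v x = u x) \<and> (\<forall>x y. \<bar>v x - v y\<bar> \<le> C * cmod (x - y) powr \<beta>)"
proof -
  obtain y0 where y0: "y0 \<in> U" using U by blast
  obtain a where a: "\<And>x. x \<in> U \<Longrightarrow> norm x \<le> a" using U(2) unfolding bounded_iff by blast
  define S where "S x = (\<lambda>y. u y + C * cmod (x - y) powr \<beta>) ` U" for x
  define v where "v x = Inf (S x)" for x
  have lower: "u y0 - C * (2 * a) powr \<beta> \<le> u y" if "y \<in> U" for y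
  proof -
    have "cmod (y - y0) \<le> 2 * a" using a[OF that] a[OF y0] norm_triangle_ineq4[of y y0] by linarith
    then have "C * cmod (y - y0) powr \<beta> \<le> C * (2 * a) powr \<beta>"
      using C \<beta> by (intro mult_left_mono powr_mono2) auto
    then show ?thesis using hol[OF that y0] by linarith
  qed
  have bdd: "bdd_below (S x)" for x
    unfolding S_def bdd_below_def
    using lower C by (intro exI[of _ "u y0 - C * (2 * a) powr \<beta>"]) (auto intro: add_increasing2)
  have ne: "S x \<noteq> {}" for x unfolding S_def using U by auto
  have "v x = u x" if "x \<in> U" for x
    unfolding v_def
  proof (rule cInf_eq_minimum)
    show "u x \<in> S x" unfolding S_def using that \<beta> by (auto intro!: image_eqI[of _ _ x])
    show "u x \<le> s" if "s \<in> S x" for s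
      using that hol[OF \<open>x \<in> U\<close>] unfolding S_def by fastforce
  qed
  moreover have le: "v x \<le> v x' + C * cmod (x - x') powr \<beta>" for x x'
  proof -
    have "v x - C * cmod (x - x') powr \<beta> \<le> v x'"
      unfolding v_def[of x']
    proof (rule cInf_greatest[OF ne])
      fix s assume "s \<in> S x'"
      then obtain y where y: "y \<in> U" "s = u y + C * cmod (x' - y) powr \<beta>" unfolding S_def by auto
      have "cmod (x - y) powr \<beta> \<le> (cmod (x - x') + cmod (x' - y)) powr \<beta>"
        using \<beta> norm_triangle_ineq[of "x - x'" "x' - y"] by (intro powr_mono2) auto
      also have "\<dots> \<le> cmod (x - x') powr \<beta> + cmod (x' - y) powr \<beta>"
        using \<beta> by (intro powr_add_le_add_powr) auto
      finally have "u y + C * cmod (x - y) powr \<beta> \<le> u y + C * (cmod (x - x') powr \<beta> + cmod (x' - y) powr \<beta>)"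
        using C by (intro add_left_mono mult_left_mono) auto
      moreover have "v x \<le> u y + C * cmod (x - y) powr \<beta>"
        unfolding v_def using y by (intro cInf_lower[OF _ bdd]) (auto simp: S_def)
      ultimately show "v x - C * cmod (x - x') powr \<beta> \<le> s" using y(2) by (simp add: algebra_simps)
    qed
    then show ?thesis by linarith
  qed
  moreover have "\<bar>v x - v y\<bar> \<le> C * cmod (x - y) powr \<beta>" for x y
    using le[of x y] le[of y x] by (simp add: norm_minus_commute abs_le_iff)
  ultimately show ?thesis by blast
qed

lemma holder_extension_complex:
  fixes H :: "complex \<Rightarrow> complex"
  assumes U: "U \<noteq> {}" "bounded U" and "holder_on \<beta> U H" and \<beta>: "0 < \<beta>" "\<beta> \<le> 1"
  shows "\<exists>F C. 0 \<le> C \<and> (\<forall>z\<in>U. F z = H z) \<and> (\<forall>x y. cmod (F x - F y) \<le> C * cmod (x - y) powr \<beta>)"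
proof -
  obtain C0 where C0: "\<And>x y. x \<in> U \<Longrightarrow> y \<in> U \<Longrightarrow> cmod (H x - H y) \<le> C0 * cmod (x - y) powr \<beta>"
    using assms(3) unfolding holder_on_def by blast
  define C where "C = max C0 0"
  have C: "0 \<le> C" unfolding C_def by simp
  have hol: "cmod (H x - H y) \<le> C * cmod (x - y) powr \<beta>" if "x \<in> U" "y \<in> U" for x y
    using C0[OF that] mult_right_mono[of C0 C "cmod (x - y) powr \<beta>"] unfolding C_def by simp
  have hol_Re: "\<bar>Re (H x) - Re (H y)\<bar> \<le> C * cmod (x - y) powr \<beta>" if "x \<in> U" "y \<in> U" for x y
    using abs_Re_le_cmod[of "H x - H y"] hol[OF that] by simp
  obtain u where u: "\<forall>x\<in>U. u x = Re (H x)" "\<forall>x y. \<bar>u x - u y\<bar> \<le> C * cmod (x - y) powr \<beta>"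
    using holder_extension_real[OF U hol_Re \<beta> C] by blast
  have hol_Im: "\<bar>Im (H x) - Im (H y)\<bar> \<le> C * cmod (x - y) powr \<beta>" if "x \<in> U" "y \<in> U" for x y
    using abs_Im_le_cmod[of "H x - H y"] hol[OF that] by simp
  obtain v where v: "\<forall>x\<in>U. v x = Im (H x)" "\<forall>x y. \<bar>v x - v y\<bar> \<le> C * cmod (x - y) powr \<beta>"
    using holder_extension_real[OF U hol_Im \<beta> C] by blast
  have "cmod (Complex (u x) (v x) - Complex (u y) (v y)) \<le> \<bar>u x - u y\<bar> + \<bar>v x - v y\<bar>" for x y
    using cmod_le[of "Complex (u x) (v x) - Complex (u y) (v y)"] by simp
  also have "\<dots> x y \<le> C * cmod (x - y) powr \<beta> + C * cmod (x - y) powr \<beta>" for x y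
    using u(2) v(2) by (intro add_mono) auto
  finally have "cmod (Complex (u x) (v x) - Complex (u y) (v y)) \<le> (2 * C) * cmod (x - y) powr \<beta>" for x y
    by (simp add: mult.assoc)
  moreover have "\<forall>z\<in>U. Complex (u z) (v z) = H z" using u(1) v(1) by (simp add: complex_eq_iff)
  ultimately show ?thesis using C by (intro exI[of _ "\<lambda>z. Complex (u z) (v z)"] exI[of _ "2 * C"]) auto
qed

lemma le_powr_if_le_min_one:
  fixes d t \<beta> :: real
  assumes "0 \<le> d" "d \<le> t" "d \<le> 1" "0 < \<beta>" "\<beta> \<le> 1"
  shows "d \<le> t powr \<beta>"
proof (cases "t \<le> 1")
  case True
  then show ?thesis
    using assms powr_mono'[OF assms(5), of t] by auto
next
  case False
  then have "1 \<le> t powr \<beta>" using assms by (intro ge_one_powr_ge_zero) auto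
  then show ?thesis using assms(3) by linarith
qed

definition radial_cutoff :: "real \<Rightarrow> complex \<Rightarrow> real" where
  "radial_cutoff r z = max 0 (min 1 (r - cmod z))"

lemma radial_cutoff_bounds: "0 \<le> radial_cutoff r z \<and> radial_cutoff r z \<le> 1"
  by (simp add: radial_cutoff_def)

lemma radial_cutoff_outside: "r \<le> cmod z \<Longrightarrow> radial_cutoff r z = 0"
  by (simp add: radial_cutoff_def)

lemma radial_cutoff_inside: "cmod z \<le> r - 1 \<Longrightarrow> radial_cutoff r z = 1"
  by (simp add: radial_cutoff_def)

lemma holder_radial_cutoff:
  assumes "0 < \<beta>" "\<beta> \<le> 1"
  shows "\<bar>radial_cutoff r x - radial_cutoff r y\<bar> \<le> cmod (x - y) powr \<beta>"
proof (rule le_powr_if_le_min_one[OF _ _ _ assms])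
  have "\<bar>radial_cutoff r x - radial_cutoff r y\<bar> \<le> \<bar>cmod x - cmod y\<bar>"
    unfolding radial_cutoff_def by (simp add: abs_le_iff max_def min_def) linarith
  then show "\<bar>radial_cutoff r x - radial_cutoff r y\<bar> \<le> cmod (x - y)"
    using norm_triangle_ineq3[of x y] by linarith
  show "\<bar>radial_cutoff r x - radial_cutoff r y\<bar> \<le> 1"
    using radial_cutoff_bounds[of r x] radial_cutoff_bounds[of r y] by linarith
qed simp

lemma holder_mult_cutoff:
  fixes f :: "complex \<Rightarrow> complex" and c :: "complex \<Rightarrow> real"
  assumes f: "\<And>x y. cmod (f x - f y) \<le> C * cmod (x - y) powr \<beta>"
    and c: "\<And>x y. \<bar>c x - c y\<bar> \<le> cmod (x - y) powr \<beta>" and c01: "\<And>x. 0 \<le> c x \<and> c x \<le> 1"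
    and supp: "\<And>x. R \<le> cmod x \<Longrightarrow> c x = 0" and bound: "\<And>x. cmod x \<le> R \<Longrightarrow> cmod (f x) \<le> M"
    and "0 \<le> C" "0 \<le> M"
  shows "cmod (of_real (c x) * f x - of_real (c y) * f y) \<le> (C + M) * cmod (x - y) powr \<beta>"
proof -
  have near: "cmod (of_real (c x) * f x - of_real (c y) * f y) \<le> (C + M) * cmod (x - y) powr \<beta>"
    if "cmod y < R" for x y
  proof -
    have "of_real (c x) * f x - of_real (c y) * f y = of_real (c x) * (f x - f y) + of_real (c x - c y) * f y"
      by (simp add: algebra_simps)
    then have "cmod (of_real (c x) * f x - of_real (c y) * f y)
        \<le> c x * cmod (f x - f y) + \<bar>c x - c y\<bar> * cmod (f y)"
      using c01[of x] by (metis abs_of_nonneg norm_mult norm_of_real norm_triangle_ineq)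
    also have "\<dots> \<le> 1 * (C * cmod (x - y) powr \<beta>) + cmod (x - y) powr \<beta> * M"
      using c01[of x] f[of x y] c[of x y] bound[of y] that
      by (intro add_mono mult_mono) auto
    finally show ?thesis by (simp add: algebra_simps)
  qed
  consider "cmod y < R" | "cmod x < R" | "R \<le> cmod x" "R \<le> cmod y" by linarith
  then show ?thesis
  proof cases
    case 1
    then show ?thesis by (rule near)
  next
    case 2
    from near[OF this, of y] show ?thesis by (simp add: norm_minus_commute)
  next
    case 3
    then show ?thesis using supp[of x] supp[of y] \<open>0 \<le> C\<close> \<open>0 \<le> M\<close> by simp
  qed
qed

section \<open>The equation \<open>\<phi>\<^sub>z\<^sub>\<bar> = F \<phi>\<close> for compactly supported Hoelder \<open>F\<close>\<close>

locale compact_holder =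
  fixes F :: "complex \<Rightarrow> complex" and C \<beta> R M :: real
  assumes holder: "\<And>x y. cmod (F x - F y) \<le> C * cmod (x - y) powr \<beta>"
    and vanishes: "\<And>z. R \<le> cmod z \<Longrightarrow> F z = 0"
    and bound: "\<And>z. cmod (F z) \<le> M"
    and exponent: "0 < \<beta>" "\<beta> \<le> 1"
    and C_nonneg: "0 \<le> C"

lemma holder_compact_extension:
  fixes H :: "complex \<Rightarrow> complex"
  assumes U: "U \<noteq> {}" "bounded U" and "holder_on \<beta> U H" and \<beta>: "0 < \<beta>" "\<beta> \<le> 1"
  shows "\<exists>F C R M. compact_holder F C \<beta> R M \<and> (\<forall>z\<in>U. F z = H z)"
proof -
  obtain F0 C where C: "0 \<le> C" and F0U: "\<forall>z\<in>U. F0 z = H z"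
    and F0: "\<And>x y. cmod (F0 x - F0 y) \<le> C * cmod (x - y) powr \<beta>"
    using holder_extension_complex[OF assms] by blast
  obtain R where R: "R > 0" "\<And>x. x \<in> U \<Longrightarrow> cmod x \<le> R" using U(2) unfolding bounded_pos by blast
  obtain y0 where y0: "y0 \<in> U" using U by blast
  define M where "M = cmod (F0 y0) + C * (2 * R + 1) powr \<beta>"
  have M: "0 \<le> M" unfolding M_def using C by simp
  have F0_bound: "cmod (F0 z) \<le> M" if "cmod z \<le> R + 1" for z
  proof -
    have "cmod (z - y0) \<le> 2 * R + 1" using norm_triangle_ineq4[of z y0] R(2)[OF y0] that by linarith
    then have "C * cmod (z - y0) powr \<beta> \<le> C * (2 * R + 1) powr \<beta>"
      using C \<beta> by (intro mult_left_mono powr_mono2) auto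
    then show ?thesis using F0[of z y0] norm_triangle_sub[of "F0 z" "F0 y0"] unfolding M_def by linarith
  qed
  define F where "F z = of_real (radial_cutoff (R + 1) z) * F0 z" for z
  have "compact_holder F (C + M) \<beta> (R + 1) M"
  proof
    show "cmod (F x - F y) \<le> (C + M) * cmod (x - y) powr \<beta>" for x y
      unfolding F_def
      by (rule holder_mult_cutoff[OF F0 holder_radial_cutoff[OF \<beta>] radial_cutoff_bounds
            radial_cutoff_outside F0_bound C M])
    show "R + 1 \<le> cmod z \<Longrightarrow> F z = 0" for z unfolding F_def by (simp add: radial_cutoff_outside)
    show "cmod (F z) \<le> M" for z
    proof (cases "cmod z \<le> R + 1")
      case True
      have "radial_cutoff (R + 1) z * cmod (F0 z) \<le> 1 * M"
        using radial_cutoff_bounds F0_bound[OF True] by (intro mult_mono) auto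
      then show ?thesis
        unfolding F_def norm_mult norm_of_real using radial_cutoff_bounds[of "R + 1" z] by simp
    qed (simp add: F_def radial_cutoff_outside M)
  qed (use \<beta> C M in auto)
  moreover have "\<forall>z\<in>U. F z = H z" unfolding F_def using R(2) F0U by (simp add: radial_cutoff_inside)
  ultimately show ?thesis by blast
qed

definition wirtinger_blinfun :: "complex \<Rightarrow> complex \<Rightarrow> complex \<Rightarrow>\<^sub>L complex" where
  "wirtinger_blinfun a b = blinfun_mult_right a + (blinfun_mult_right b o\<^sub>L Blinfun cnj)"

lemma wirtinger_blinfun_apply [simp]: "blinfun_apply (wirtinger_blinfun a b) v = a * v + b * cnj v"
  by (simp add: wirtinger_blinfun_def blinfun.add_left bounded_linear_Blinfun_apply bounded_linear_cnj)

lemma continuous_on_wirtinger_blinfun [continuous_intros]: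
  "continuous_on S a \<Longrightarrow> continuous_on S b \<Longrightarrow> continuous_on S (\<lambda>x. wirtinger_blinfun (a x) (b x))"
  unfolding wirtinger_blinfun_def by (intro continuous_intros)

lemma has_derivative_translated_kernel:
  assumes K: "\<And>w. (K has_derivative (\<lambda>v. k w * v + p w * cnj v)) (at w)"
  shows "((\<lambda>x. c * K (t - x)) has_derivative
    blinfun_apply (wirtinger_blinfun (- (c * k (t - x))) (- (c * p (t - x))))) (at x)"
proof -
  have "((\<lambda>x. K (t - x)) has_derivative (\<lambda>v. k (t - x) * (0 - v) + p (t - x) * cnj (0 - v))) (at x)"
    using has_derivative_compose[OF has_derivative_diff[OF has_derivative_const has_derivative_ident] K]
    by simp
  from has_derivative_mult_right[OF this, of c]
  have "((\<lambda>x. c * K (t - x)) has_derivative (\<lambda>v. c * (k (t - x) * (0 - v) + p (t - x) * cnj (0 - v)))) (at x)" .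
  moreover have "(\<lambda>v. c * (k (t - x) * (0 - v) + p (t - x) * cnj (0 - v)))
      = blinfun_apply (wirtinger_blinfun (- (c * k (t - x))) (- (c * p (t - x))))"
    by (rule ext) (simp add: algebra_simps)
  ultimately show ?thesis by simp
qed

context compact_holder
begin

lemma M_nonneg: "0 \<le> M"
  using bound[of 0] norm_ge_zero order_trans by blast

lemma continuous_F: "continuous_on UNIV F"
proof (rule continuous_at_imp_continuous_on, intro ballI)
  fix x :: complex
  have "((\<lambda>y. cmod (y - x)) \<longlongrightarrow> 0) (at x)"
    by (intro tendsto_norm_zero) (auto intro!: tendsto_eq_intros)
  then have "((\<lambda>y. C * cmod (y - x) powr \<beta>) \<longlongrightarrow> 0) (at x)"
    using exponent by (intro tendsto_mult_right_zero tendsto_zero_powrI) auto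
  then have "((\<lambda>y. F y - F x) \<longlongrightarrow> 0) (at x)"
    by (rule Lim_null_comparison[rotated]) (use holder in auto)
  then show "isCont F x" unfolding isCont_def by (simp add: LIM_zero_iff)
qed

lemma F_outside_square: "\<zeta> \<notin> square 0 R \<Longrightarrow> F \<zeta> = 0"
  using ball_subset_square[of 0 R] by (intro vanishes) (force simp: subset_iff not_less)

definition conv :: "(complex \<Rightarrow> complex) \<Rightarrow> complex \<Rightarrow> complex" where
  "conv k z = integral UNIV (\<lambda>\<zeta>. F \<zeta> * k (\<zeta> - z))"

lemma continuous_on_conv_integrand:
  assumes "continuous_on UNIV k"
  shows "continuous_on UNIV (\<lambda>\<zeta>. F \<zeta> * k (\<zeta> - z))"
  by (intro continuous_intros continuous_F continuous_on_compose2[OF assms]) auto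

lemma conv_integral_square:
  assumes "continuous_on UNIV k"
  shows "(\<lambda>\<zeta>. F \<zeta> * k (\<zeta> - z)) integrable_on UNIV"
    "conv k z = integral (square 0 R) (\<lambda>\<zeta>. F \<zeta> * k (\<zeta> - z))"
  using integral_UNIV_eq_square[OF continuous_on_conv_integrand[OF assms], of 0 R]
  by (auto simp: conv_def F_outside_square)

lemma conv_diff:
  "continuous_on UNIV k \<Longrightarrow> continuous_on UNIV k' \<Longrightarrow> conv k z - conv k' z = conv (\<lambda>w. k w - k' w) z"
  unfolding conv_def right_diff_distrib by (intro integral_diff[symmetric] conv_integral_square)

lemma continuous_on_conv:
  assumes "continuous_on UNIV k"
  shows "continuous_on UNIV (conv k)"
proof -
  have "continuous_on UNIV (\<lambda>z. integral (square 0 R) (\<lambda>\<zeta>. F \<zeta> * k (\<zeta> - z)))"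
    unfolding square_def
    by (rule integral_continuous_on_param)
      (auto simp: split_beta intro!: continuous_intros continuous_on_compose2[OF continuous_F]
        continuous_on_compose2[OF assms])
  then show ?thesis using conv_integral_square(2)[OF assms] by simp
qed

lemma has_derivative_conv:
  assumes K: "\<And>w. (K has_derivative (\<lambda>v. k w * v + p w * cnj v)) (at w)"
    and cont: "continuous_on UNIV k" "continuous_on UNIV p" "continuous_on UNIV K"
  shows "(conv K has_derivative (\<lambda>v. - conv k z * v - conv p z * cnj v)) (at z)"
proof -
  define f where "f x t = F t * K (t - x)" for x t
  define f' where "f' x t = wirtinger_blinfun (- (F t * k (t - x))) (- (F t * p (t - x)))" for x t
  have f_deriv: "((\<lambda>x. f x t) has_derivative blinfun_apply (f' x t)) (at x within UNIV)" for x t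
    unfolding f_def f'_def using has_derivative_translated_kernel[OF K] by simp
  have f_int: "f x integrable_on square 0 R" for x
    unfolding f_def by (intro integrable_on_square continuous_on_conv_integrand cont)
  have f'_cont: "continuous_on (UNIV \<times> square 0 R) (\<lambda>(x, t). f' x t)"
    unfolding f'_def split_beta
    by (intro continuous_intros continuous_on_compose2[OF continuous_F]
        continuous_on_compose2[OF cont(1)] continuous_on_compose2[OF cont(2)]) auto
  have deriv: "((\<lambda>x. integral (square 0 R) (f x)) has_derivative integral (square 0 R) (f' z)) (at z)"
    using leibniz_rule[OF f_deriv f_int[unfolded square_def] f'_cont[unfolded square_def], of z]
    unfolding square_def by simp
  have deriv_apply: "blinfun_apply (integral (square 0 R) (f' z)) = (\<lambda>v. - conv k z * v - conv p z * cnj v)"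
  proof
    fix v
    have "f' z integrable_on square 0 R"
      unfolding f'_def
      by (intro integrable_on_square continuous_intros continuous_F
          continuous_on_compose2[OF cont(1)] continuous_on_compose2[OF cont(2)]) auto
    then have "blinfun_apply (integral (square 0 R) (f' z)) v
        = integral (square 0 R) (\<lambda>t. (- (F t * k (t - z))) * v + (- (F t * p (t - z))) * cnj v)"
      unfolding square_def by (simp add: blinfun_apply_integral f'_def)
    also have "\<dots> = integral (square 0 R) (\<lambda>t. (- (F t * k (t - z))) * v)
        + integral (square 0 R) (\<lambda>t. (- (F t * p (t - z))) * cnj v)"
      by (intro integral_add integrable_on_mult_left integrable_neg integrable_on_square
          continuous_on_conv_integrand cont)
    also have "\<dots> = - conv k z * v - conv p z * cnj v"
      by (simp add: conv_integral_square(2)[OF cont(1)] conv_integral_square(2)[OF cont(2)])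
    finally show "blinfun_apply (integral (square 0 R) (f' z)) v = - conv k z * v - conv p z * cnj v" .
  qed
  have "conv K = (\<lambda>x. integral (square 0 R) (f x))"
    using conv_integral_square(2)[OF cont(3)] unfolding f_def by blast
  then show ?thesis using deriv unfolding deriv_apply by simp
qed

end

definition scale :: "nat \<Rightarrow> real" where
  "scale n = (1/2) ^ n"

lemma scale_pos: "scale n > 0"
  by (simp add: scale_def)

lemma scale_Suc: "scale (Suc n) = scale n / 2"
  by (simp add: scale_def)

context compact_holder
begin

definition ratio :: real where
  "ratio = (1/2) powr \<beta>"

lemma ratio_pos: "0 < ratio"
  by (simp add: ratio_def)

lemma ratio_less_1: "ratio < 1"
  using exponent powr_less_mono2[of \<beta> "1/2" 1] by (simp add: ratio_def)

lemma scale_powr: "scale n powr \<beta> = ratio ^ n"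
  by (simp add: scale_def ratio_def powr_realpow[symmetric] powr_powr powr_power mult.commute)

lemma conv_eq_oscillation:
  assumes k: "continuous_on UNIV k" and vanish: "\<And>w. e \<le> cmod w \<Longrightarrow> k w = 0"
  shows "conv k z = integral (square z e) (\<lambda>\<zeta>. (F \<zeta> - F z) * k (\<zeta> - z)) + F z * integral (square 0 e) k"
proof -
  have shifted: "continuous_on UNIV (\<lambda>\<zeta>. k (\<zeta> - z))"
    by (intro continuous_on_compose2[OF k] continuous_intros) auto
  have "k (\<zeta> - z) = 0" if "\<zeta> \<notin> square z e" for \<zeta>
    using that ball_subset_square[of z e] by (intro vanish) (force simp: dist_norm norm_minus_commute not_less)
  then have "conv k z = integral (square z e) (\<lambda>\<zeta>. F \<zeta> * k (\<zeta> - z))"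
    unfolding conv_def by (intro integral_UNIV_eq_square(2) continuous_on_conv_integrand k) simp
  also have "\<dots> = integral (square z e) (\<lambda>\<zeta>. (F \<zeta> - F z) * k (\<zeta> - z) + F z * k (\<zeta> - z))"
    by (simp add: algebra_simps)
  also have "\<dots> = integral (square z e) (\<lambda>\<zeta>. (F \<zeta> - F z) * k (\<zeta> - z)) + F z * integral (square 0 e) k"
    using integral_square_translate[OF k, of z e]
    by (subst integral_add) (auto intro!: integrable_on_square continuous_intros continuous_F shifted)
  finally show ?thesis .
qed

lemma norm_oscillation_integral_le:
  assumes "continuous_on UNIV k" and vanish: "\<And>w. e \<le> cmod w \<Longrightarrow> k w = 0"
    and K: "\<And>w. cmod (k w) \<le> K" and e: "e > 0"
  shows "cmod (integral (square z e) (\<lambda>\<zeta>. (F \<zeta> - F z) * k (\<zeta> - z))) \<le> C * e powr \<beta> * K * (4 * e\<^sup>2)"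
proof -
  have K0: "0 \<le> K" using K[of 0] norm_ge_zero order_trans by blast
  have "cmod ((F \<zeta> - F z) * k (\<zeta> - z)) \<le> C * e powr \<beta> * K" for \<zeta>
  proof (cases "cmod (\<zeta> - z) < e")
    case True
    have "cmod (F \<zeta> - F z) \<le> C * e powr \<beta>"
      using holder[of \<zeta> z] True exponent C_nonneg
      by (meson less_imp_le mult_left_mono norm_ge_zero order_trans powr_mono2)
    then show ?thesis unfolding norm_mult by (rule mult_mono[OF _ K]) (use C_nonneg in auto)
  qed (use vanish C_nonneg K0 in simp)
  moreover have "(\<lambda>\<zeta>. (F \<zeta> - F z) * k (\<zeta> - z)) integrable_on square z e"
    by (intro integrable_on_square continuous_intros continuous_F continuous_on_compose2[OF assms(1)]) auto
  ultimately have "cmod (integral (square z e) (\<lambda>\<zeta>. (F \<zeta> - F z) * k (\<zeta> - z)))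
      \<le> C * e powr \<beta> * K * Henstock_Kurzweil_Integration.content (square z e)"
    unfolding square_def using C_nonneg K0 by (intro has_integral_bound[OF _ integrable_integral]) auto
  then show ?thesis using e by (simp add: content_square)
qed

lemma norm_conv_le:
  assumes k: "continuous_on UNIV k" and vanish: "\<And>w. e \<le> cmod w \<Longrightarrow> k w = 0"
    and K: "\<And>w. cmod (k w) \<le> K" and e: "e > 0"
  shows "cmod (conv k z) \<le> M * K * (4 * e\<^sup>2)"
proof -
  have K0: "0 \<le> K" using K[of 0] norm_ge_zero order_trans by blast
  have "k (\<zeta> - z) = 0" if "\<zeta> \<notin> square z e" for \<zeta>
    using that ball_subset_square[of z e] by (intro vanish) (force simp: dist_norm norm_minus_commute not_less)
  then have "conv k z = integral (square z e) (\<lambda>\<zeta>. F \<zeta> * k (\<zeta> - z))"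
    unfolding conv_def by (intro integral_UNIV_eq_square(2) continuous_on_conv_integrand k) simp
  moreover have "cmod (integral (square z e) (\<lambda>\<zeta>. F \<zeta> * k (\<zeta> - z)))
      \<le> M * K * Henstock_Kurzweil_Integration.content (square z e)"
    unfolding square_def using M_nonneg K0 bound K
    by (intro has_integral_bound[OF _ integrable_integral] integrable_on_square[unfolded square_def]
        continuous_on_conv_integrand k) (auto simp: norm_mult intro: mult_mono)
  ultimately show ?thesis using e by (simp add: content_square)
qed

lemma conv_reg_kernel_dz_increment:
  "cmod (conv (reg_kernel_dz (scale n)) z - conv (reg_kernel_dz (scale (Suc n))) z) \<le> 20 * C * ratio ^ n"
proof -
  define e where "e = scale n"
  have e: "e > 0" unfolding e_def by (rule scale_pos)
  define d where "d w = reg_kernel_dz e w - reg_kernel_dz (e/2) w" for w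
  have d: "continuous_on UNIV d" unfolding d_def
    using e by (intro continuous_intros continuous_on_reg_kernel_dz) auto
  have vanish: "d w = 0" if "e \<le> cmod w" for w
    using that e unfolding d_def by (simp add: reg_kernel_dz_outside)
  have bound: "cmod (d w) \<le> 5 / e\<^sup>2" for w
  proof -
    have "cmod (d w) \<le> 1 / e\<^sup>2 + 1 / (e/2)\<^sup>2"
      unfolding d_def using e norm_reg_kernel_dz_le[of e w] norm_reg_kernel_dz_le[of "e/2" w]
      by (intro order_trans[OF norm_triangle_ineq4 add_mono]) auto
    then show ?thesis by (simp add: field_simps power2_eq_square)
  qed
  \<comment> \<open>\<open>d\<close> is odd under rotation by \<open>\<i>\<close>, so \<open>F z\<close> does not contribute and only the oscillation is left\<close>
  have "integral (square 0 e) d = 0"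
    using d by (rule integral_square_rotation_odd) (simp add: d_def reg_kernel_dz_rotate)
  then have "cmod (conv (reg_kernel_dz e) z - conv (reg_kernel_dz (e/2)) z)
      = cmod (integral (square z e) (\<lambda>\<zeta>. (F \<zeta> - F z) * d (\<zeta> - z)))"
    using e conv_eq_oscillation[OF d vanish, where z = z]
    by (subst conv_diff) (auto intro: continuous_on_reg_kernel_dz simp: d_def[abs_def])
  also have "\<dots> \<le> C * e powr \<beta> * (5 / e\<^sup>2) * (4 * e\<^sup>2)"
    by (rule norm_oscillation_integral_le[OF d vanish bound e])
  also have "\<dots> = 20 * C * ratio ^ n" using e unfolding e_def scale_powr by (simp add: field_simps)
  finally show ?thesis unfolding e_def scale_Suc .
qed

lemma conv_reg_kernel_dzbar_error:
  "cmod (conv (\<lambda>w. of_real (reg_kernel_dzbar (scale n) w)) z - of_real kernel_mass * F z) \<le> 8 * C * ratio ^ n"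
proof -
  define e where "e = scale n"
  have e: "e > 0" unfolding e_def by (rule scale_pos)
  define d where "d w = (of_real (reg_kernel_dzbar e w) :: complex)" for w
  have d: "continuous_on UNIV d" unfolding d_def
    using e by (intro continuous_intros continuous_on_reg_kernel_dzbar)
  have vanish: "d w = 0" if "e \<le> cmod w" for w
    using that e unfolding d_def by (simp add: reg_kernel_dzbar_outside)
  have bound: "cmod (d w) \<le> 2 / e\<^sup>2" for w
    unfolding d_def using reg_kernel_dzbar_nonneg[OF e, of w] reg_kernel_dzbar_le[OF e, of w] by simp
  have "integral (square 0 e) d = of_real kernel_mass"
    unfolding d_def by (intro integral_unique has_integral_of_real has_integral_reg_kernel_dzbar e)
  then have "cmod (conv d z - of_real kernel_mass * F z) = cmod (integral (square z e) (\<lambda>\<zeta>. (F \<zeta> - F z) * d (\<zeta> - z)))"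
    using conv_eq_oscillation[OF d vanish, where z = z] by simp
  also have "\<dots> \<le> C * e powr \<beta> * (2 / e\<^sup>2) * (4 * e\<^sup>2)"
    by (rule norm_oscillation_integral_le[OF d vanish bound e])
  also have "\<dots> = 8 * C * ratio ^ n" using e unfolding e_def scale_powr by (simp add: field_simps)
  finally show ?thesis unfolding d_def e_def .
qed

lemma conv_reg_kernel_increment:
  "cmod (conv (reg_kernel (scale n)) z - conv (reg_kernel (scale (Suc n))) z) \<le> 24 * M * (1/2) ^ n"
proof -
  define e where "e = scale n"
  have e: "e > 0" unfolding e_def by (rule scale_pos)
  define d where "d w = reg_kernel e w - reg_kernel (e/2) w" for w
  have d: "continuous_on UNIV d" unfolding d_def
    using e by (intro continuous_intros continuous_on_reg_kernel) auto
  have vanish: "d w = 0" if "e \<le> cmod w" for w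
    using that e unfolding d_def by (simp add: reg_kernel_outside)
  have bound: "cmod (d w) \<le> 6 / e" for w
  proof -
    have "cmod (d w) \<le> 2 / e + 2 / (e/2)"
      unfolding d_def using e norm_reg_kernel_le[of e w] norm_reg_kernel_le[of "e/2" w]
      by (intro order_trans[OF norm_triangle_ineq4 add_mono]) auto
    then show ?thesis by (simp add: field_simps)
  qed
  have "cmod (conv (reg_kernel e) z - conv (reg_kernel (e/2)) z) = cmod (conv d z)"
    using e by (subst conv_diff) (auto intro: continuous_on_reg_kernel simp: d_def[abs_def])
  also have "\<dots> \<le> M * (6 / e) * (4 * e\<^sup>2)"
    by (rule norm_conv_le[OF d vanish bound e])
  also have "\<dots> = 24 * M * (1/2) ^ n" using e unfolding e_def scale_def by (simp add: field_simps power2_eq_square)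
  finally show ?thesis unfolding e_def scale_Suc .
qed

end

context compact_holder
begin

text \<open>Up to a constant factor this is the Beurling transform of \<open>F\<close>.\<close>

definition beurling :: "complex \<Rightarrow> complex" where
  "beurling z = lim (\<lambda>n. conv (reg_kernel_dz (scale n)) z)"

lemma norm_conv_reg_kernel_dz_minus_beurling_le:
  "cmod (conv (reg_kernel_dz (scale n)) z - beurling z) \<le> 20 * C * ratio ^ n / (1 - ratio)"
  unfolding beurling_def
  using geometric_increments_convergent(2)[where f = "\<lambda>n. conv (reg_kernel_dz (scale n)) z",
      OF conv_reg_kernel_dz_increment] ratio_pos ratio_less_1 by simp

lemma uniform_limit_beurling:
  "uniform_limit UNIV (\<lambda>n. conv (reg_kernel_dz (scale n))) beurling sequentially"
proof -
  have "(\<lambda>n. 20 * C / (1 - ratio) * ratio ^ n) \<longlonglongrightarrow> 0"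
    using ratio_pos ratio_less_1 by (intro tendsto_mult_right_zero LIMSEQ_power_zero) auto
  then show ?thesis
    unfolding uniform_limit_iff dist_norm
    using norm_conv_reg_kernel_dz_minus_beurling_le
    by (auto elim!: eventually_mono[OF order_tendstoD(2)] intro: le_less_trans)
qed

lemma continuous_on_beurling: "continuous_on UNIV beurling"
  by (rule uniform_limit_theorem[OF _ uniform_limit_beurling])
    (auto intro!: always_eventually continuous_on_conv continuous_on_reg_kernel_dz scale_pos)

lemma norm_conv_reg_kernel_derivative_error_le:
  "cmod ((- conv (reg_kernel_dz (scale n)) z * v - conv (\<lambda>w. of_real (reg_kernel_dzbar (scale n) w)) z * cnj v)
      - (- beurling z * v - of_real kernel_mass * F z * cnj v))
    \<le> (20 * C / (1 - ratio) + 8 * C) * ratio ^ n * cmod v"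
proof -
  define a b where "a = conv (reg_kernel_dz (scale n)) z - beurling z"
    and "b = conv (\<lambda>w. of_real (reg_kernel_dzbar (scale n) w)) z - of_real kernel_mass * F z"
  have "(- conv (reg_kernel_dz (scale n)) z * v - conv (\<lambda>w. of_real (reg_kernel_dzbar (scale n) w)) z * cnj v)
      - (- beurling z * v - of_real kernel_mass * F z * cnj v) = - (a * v) - b * cnj v"
    unfolding a_def b_def by (simp add: algebra_simps)
  then have "cmod ((- conv (reg_kernel_dz (scale n)) z * v
        - conv (\<lambda>w. of_real (reg_kernel_dzbar (scale n) w)) z * cnj v)
      - (- beurling z * v - of_real kernel_mass * F z * cnj v)) \<le> cmod a * cmod v + cmod b * cmod v"
    using norm_triangle_ineq4[of "- (a * v)" "b * cnj v"] by (simp add: norm_mult)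
  also have "\<dots> \<le> (20 * C * ratio ^ n / (1 - ratio)) * cmod v + (8 * C * ratio ^ n) * cmod v"
    unfolding a_def b_def
    by (intro add_mono mult_right_mono norm_conv_reg_kernel_dz_minus_beurling_le conv_reg_kernel_dzbar_error) auto
  also have "\<dots> = (20 * C / (1 - ratio) + 8 * C) * ratio ^ n * cmod v"
    by (simp add: algebra_simps)
  finally show ?thesis .
qed

text \<open>The limit of \<open>conv (reg_kernel (scale n))\<close> is the Cauchy transform of \<open>F\<close> (up to a constant factor).\<close>

lemma exists_cauchy_transform:
  "\<exists>g. \<forall>z. (g has_derivative (\<lambda>v. - beurling z * v - of_real kernel_mass * F z * cnj v)) (at z)"
proof -
  let ?G = "\<lambda>n. conv (reg_kernel (scale n))"
    and ?G' = "\<lambda>n z v. - conv (reg_kernel_dz (scale n)) z * v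
        - conv (\<lambda>w. of_real (reg_kernel_dzbar (scale n) w)) z * cnj v"
  have deriv: "(?G n has_derivative ?G' n z) (at z within UNIV)" for n z
    using has_derivative_conv[OF has_derivative_reg_kernel[OF scale_pos]
        continuous_on_reg_kernel_dz[OF scale_pos] _ continuous_on_reg_kernel[OF scale_pos]]
    by (simp add: continuous_intros continuous_on_reg_kernel_dzbar[OF scale_pos])
  obtain l where l: "(\<lambda>n. ?G n 0) \<longlonglongrightarrow> l"
    using geometric_increments_convergent(1)[where f = "\<lambda>n. ?G n 0", OF conv_reg_kernel_increment]
    by (auto simp: convergent_def)
  define T where "T n = (20 * C / (1 - ratio) + 8 * C) * ratio ^ n" for n
  have T: "T \<longlonglongrightarrow> 0"
    unfolding T_def using ratio_pos ratio_less_1 by (intro tendsto_mult_right_zero LIMSEQ_power_zero) auto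
  have uniform: "\<forall>\<^sub>F n in sequentially. \<forall>z\<in>UNIV. \<forall>v.
      cmod (?G' n z v - (- beurling z * v - of_real kernel_mass * F z * cnj v)) \<le> \<epsilon> * cmod v"
    if "\<epsilon> > 0" for \<epsilon>
    using order_tendstoD(2)[OF T that]
  proof (rule eventually_mono, intro ballI allI)
    fix n z v assume "T n < \<epsilon>"
    then have "T n * cmod v \<le> \<epsilon> * cmod v" by (intro mult_right_mono) auto
    then show "cmod (?G' n z v - (- beurling z * v - of_real kernel_mass * F z * cnj v)) \<le> \<epsilon> * cmod v"
      using norm_conv_reg_kernel_derivative_error_le[of n z v] unfolding T_def by linarith
  qed
  obtain g where "\<forall>z\<in>UNIV. (\<lambda>n. ?G n z) \<longlonglongrightarrow> g z \<and>
      (g has_derivative (\<lambda>v. - beurling z * v - of_real kernel_mass * F z * cnj v)) (at z within UNIV)"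
    using has_derivative_sequence[OF convex_UNIV deriv uniform UNIV_I l] by blast
  then show ?thesis by auto
qed

lemma exists_dbar_exp_solution: "\<exists>\<phi>. C1_on UNIV \<phi> \<and> (\<forall>z. \<phi> z \<noteq> 0) \<and> (\<forall>z. dzbar \<phi> z = F z * \<phi> z)"
proof -
  obtain g where g: "\<And>z. (g has_derivative (\<lambda>v. - beurling z * v - of_real kernel_mass * F z * cnj v)) (at z)"
    using exists_cauchy_transform by blast
  define c where "c = - 1 / (of_real kernel_mass :: complex)"
  have c: "c * of_real kernel_mass = - 1" unfolding c_def using kernel_mass_pos by simp
  define \<phi> where "\<phi> z = exp (c * g z)" for z
  have deriv: "(\<phi> has_derivative (\<lambda>v. (- \<phi> z * c * beurling z) * v + (\<phi> z * F z) * cnj v)) (at z)" for z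
  proof -
    from has_derivative_compose[OF has_derivative_mult_right[OF g] DERIV_exp[unfolded has_field_derivative_def]]
    have "(\<phi> has_derivative (\<lambda>v. \<phi> z * (c * (- beurling z * v - of_real kernel_mass * F z * cnj v)))) (at z)"
      unfolding \<phi>_def .
    moreover have "\<phi> z * (c * (- beurling z * v - of_real kernel_mass * F z * cnj v))
        = (- \<phi> z * c * beurling z) * v + (\<phi> z * F z) * cnj v" for v
    proof -
      have "\<phi> z * (c * (- beurling z * v - of_real kernel_mass * F z * cnj v))
          = (- \<phi> z * c * beurling z) * v - \<phi> z * (c * of_real kernel_mass) * F z * cnj v"
        by (simp add: algebra_simps)
      then show ?thesis unfolding c by simp
    qed
    ultimately show ?thesis by simp
  qed
  have "continuous_on UNIV \<phi>"
    by (rule continuous_at_imp_continuous_on) (use deriv has_derivative_continuous in blast)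
  then have "C1_on UNIV \<phi>"
    unfolding C1_on_def wirtinger_of_has_derivative(1,2)[OF deriv] using deriv
    by (auto intro!: continuous_intros continuous_F continuous_on_beurling simp: differentiable_def)
  moreover have "\<forall>z. dzbar \<phi> z = F z * \<phi> z"
    using wirtinger_of_has_derivative(4)[OF deriv] by (simp add: mult.commute)
  ultimately show ?thesis unfolding \<phi>_def by auto
qed

end

lemma exists_nonvanishing_dbar_solution:
  fixes H :: "complex \<Rightarrow> complex"
  assumes "U \<noteq> {}" "bounded U" "holder_on \<beta> U H" "0 < \<beta>" "\<beta> \<le> 1"
  shows "\<exists>\<phi>. C1_on U \<phi> \<and> (\<forall>z\<in>U. \<phi> z \<noteq> 0) \<and> (\<forall>z\<in>U. dzbar \<phi> z = H z * \<phi> z)"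
proof -
  obtain F C R M where "compact_holder F C \<beta> R M" and FU: "\<forall>z\<in>U. F z = H z"
    using holder_compact_extension[OF assms] by blast
  then obtain \<phi> where "C1_on UNIV \<phi>" "\<forall>z. \<phi> z \<noteq> 0" "\<forall>z. dzbar \<phi> z = F z * \<phi> z"
    using compact_holder.exists_dbar_exp_solution by blast
  then show ?thesis using C1_on_subset FU by (metis subset_UNIV)
qed

definition pushforward_coeff :: "(complex \<Rightarrow> complex) \<Rightarrow> (complex \<Rightarrow> complex) \<Rightarrow> complex \<Rightarrow> complex" where
  "pushforward_coeff \<Psi> X \<zeta> = cnj (dz \<Psi> \<zeta>) * X (\<Psi> \<zeta>)"

lemma continuous_on_pushforward_coeff:
  assumes "C1_on T \<Psi>" "\<Psi> ` T \<subseteq> S" "continuous_on S X"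
  shows "continuous_on T (pushforward_coeff \<Psi> X)"
  unfolding pushforward_coeff_def[abs_def]
  using assms by (intro continuous_intros C1_on_imp_continuous_on_dz continuous_on_compose2[OF assms(3)]
      C1_on_imp_continuous_on)

lemma eq_on_pullback_pushforward:
  assumes beltrami: "\<And>z. z \<in> S \<Longrightarrow> dzbar \<Phi> z = \<mu> z * dz \<Phi> z"
    and "\<And>z. z \<in> S \<Longrightarrow> dz \<Phi> z \<noteq> 0" "\<And>z. z \<in> S \<Longrightarrow> jac \<Phi> z > 0"
    and inverse: "\<And>z. z \<in> S \<Longrightarrow> \<Psi> (\<Phi> z) = z"
    and inverse_dz: "\<And>z. z \<in> S \<Longrightarrow> cnj (dz \<Psi> (\<Phi> z)) = dz \<Phi> z / of_real (jac \<Phi> z)"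
  shows "eq_on S (\<mu>, A, B, F)
    (pullback \<Phi> (\<lambda>_. 0, pushforward_coeff \<Psi> A, pushforward_coeff \<Psi> B, pushforward_coeff \<Psi> F))"
proof -
  have "of_real (jac \<Phi> z) * pushforward_coeff \<Psi> X (\<Phi> z) / dz \<Phi> z = X z" if "z \<in> S" for X z
    using assms(2,3)[OF that] by (simp add: pushforward_coeff_def inverse_dz[OF that] inverse[OF that])
  then show ?thesis
    unfolding eq_on_def pullback_def Let_def using assms(2) by (simp add: beltrami)
qed

lemma domain_image_of_jac_pos:
  assumes "domain S" "C1_on S \<Phi>" "\<And>z. z \<in> S \<Longrightarrow> jac \<Phi> z > 0"
  shows "domain (\<Phi> ` S)"
  using assms open_image_of_jac_pos[of S \<Phi>] connected_continuous_image[of S \<Phi>] C1_on_imp_continuous_on[of S \<Phi>]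
  unfolding domain_def C1_on_def by auto

lemma gd_step_pushforward:
  assumes dom: "domain S" and bv: "BV S (\<mu>, A, B, F)" and "inj_on \<Phi> S" and "C1_on S \<Phi>"
    and inv_C1: "C1_on (\<Phi> ` S) (inv_into S \<Phi>)" and beltrami: "\<And>z. z \<in> S \<Longrightarrow> dzbar \<Phi> z = \<mu> z * dz \<Phi> z"
  defines "\<Psi> \<equiv> inv_into S \<Phi>"
  shows "gd_step (S, (\<mu>, A, B, F))
    (\<Phi> ` S, (\<lambda>_. 0, pushforward_coeff \<Psi> A, pushforward_coeff \<Psi> B, pushforward_coeff \<Psi> F))"
proof -
  have inverse: "\<Psi> (\<Phi> z) = z" if "z \<in> S" for z
    unfolding \<Psi>_def using inv_into_f_f[OF \<open>inj_on \<Phi> S\<close> that] .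
  have "dz \<Phi> z \<noteq> 0 \<and> jac \<Phi> z > 0 \<and> cnj (dz \<Psi> (\<Phi> z)) = dz \<Phi> z / of_real (jac \<Phi> z)" if "z \<in> S" for z
    using beltrami_inverse_dz[of S z \<Phi> \<Psi> "\<mu> z"] that dom bv inverse beltrami \<open>C1_on S \<Phi>\<close> inv_C1
    unfolding domain_def BV_def C1_on_def \<Psi>_def by auto
  note derivs = conjunct1[OF this] conjunct1[OF conjunct2[OF this]] conjunct2[OF conjunct2[OF this]]
  have "BV (\<Phi> ` S) (\<lambda>_. 0, pushforward_coeff \<Psi> A, pushforward_coeff \<Psi> B, pushforward_coeff \<Psi> F)"
    using bv inv_C1 inverse unfolding BV_def \<Psi>_def[symmetric]
    by (auto intro!: continuous_on_pushforward_coeff[where S = S] simp: image_subset_iff)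
  moreover have "admissible_diffeo S (\<Phi> ` S) \<Phi>"
    unfolding admissible_diffeo_def
    using inj_on_imp_bij_betw[OF \<open>inj_on \<Phi> S\<close>] \<open>C1_on S \<Phi>\<close> inv_C1 derivs(2) by auto
  ultimately show ?thesis
    unfolding gd_step_def diff_rel_def
    using dom bv domain_image_of_jac_pos[OF dom \<open>C1_on S \<Phi>\<close> derivs(2)]
      eq_on_pullback_pushforward[OF beltrami derivs(1,2) inverse derivs(3)] by auto
qed

lemma gd_step_gauge_zero_A:
  assumes dom: "domain S" and bv: "BV S (\<lambda>_. 0, A, B, F)"
    and "C1_on S \<phi>" and nonzero: "\<forall>z\<in>S. \<phi> z \<noteq> 0" and dbar: "\<forall>z\<in>S. dzbar \<phi> z = A z * \<phi> z"
  shows "gd_step (S, (\<lambda>_. 0, A, B, F)) (S, (\<lambda>_. 0, \<lambda>_. 0, \<lambda>z. B z * \<phi> z / cnj (\<phi> z), \<lambda>z. \<phi> z * F z))"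
proof -
  have "continuous_on S \<phi>" using \<open>C1_on S \<phi>\<close> by (rule C1_on_imp_continuous_on)
  then have "BV S (\<lambda>_. 0, \<lambda>_. 0, \<lambda>z. B z * \<phi> z / cnj (\<phi> z), \<lambda>z. \<phi> z * F z)"
    using bv nonzero unfolding BV_def by (auto intro!: continuous_intros)
  moreover have "gauge_rel S (\<lambda>_. 0, A, B, F) (\<lambda>_. 0, \<lambda>_. 0, \<lambda>z. B z * \<phi> z / cnj (\<phi> z), \<lambda>z. \<phi> z * F z)"
    unfolding gauge_rel_def eq_on_def gauge_act_def using \<open>C1_on S \<phi>\<close> nonzero dbar by auto
  ultimately show ?thesis unfolding gd_step_def using dom bv by simp
qed

theorem corollary6p5:
  fixes \<Omega> :: "complex set" and \<mu> A B F \<Phi> :: "complex \<Rightarrow> complex" and \<alpha> :: real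
  assumes "domain \<Omega>" and "bounded \<Omega>"
    and "BV \<Omega> (\<mu>, A, B, F)"
    and "0 < \<alpha>" and "\<alpha> < 1"
    and "C1a_on \<alpha> \<Omega> \<mu>"
    and "\<exists>k<1. \<forall>z\<in>\<Omega>. cmod (\<mu> z) \<le> k"
    and "inj_on \<Phi> \<Omega>"
    and "C2a_on \<alpha> \<Omega> \<Phi>"
    and "C1_on (\<Phi> ` \<Omega>) (inv_into \<Omega> \<Phi>)"
    and "\<forall>z\<in>\<Omega>. dzbar \<Phi> z = \<mu> z * dz \<Phi> z"
    and "bounded (\<Phi> ` \<Omega>)"
    and "\<exists>\<beta>>0. \<beta> \<le> 1 \<and> holder_on \<beta> (\<Phi> ` \<Omega>)
           (\<lambda>\<zeta>. cnj (dz (inv_into \<Omega> \<Phi>) \<zeta>) * A (inv_into \<Omega> \<Phi> \<zeta>))"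
  shows "\<exists>B' F'. BV (\<Phi> ` \<Omega>) (\<lambda>_. 0, \<lambda>_. 0, B', F') \<and>
           gd_equiv (\<Omega>, (\<mu>, A, B, F)) (\<Phi> ` \<Omega>, (\<lambda>_. 0, \<lambda>_. 0, B', F'))"
proof -
  let ?T = "pushforward_coeff (inv_into \<Omega> \<Phi>)"
  have "C1_on \<Omega> \<Phi>" using \<open>C2a_on \<alpha> \<Omega> \<Phi>\<close> unfolding C2a_on_def C2_on_def by blast
  then have straighten: "gd_step (\<Omega>, (\<mu>, A, B, F)) (\<Phi> ` \<Omega>, (\<lambda>_. 0, ?T A, ?T B, ?T F))"
    using gd_step_pushforward assms(1,3,8,10,11) by blast
  then have "domain (\<Phi> ` \<Omega>)" "BV (\<Phi> ` \<Omega>) (\<lambda>_. 0, ?T A, ?T B, ?T F)"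
    unfolding gd_step_def by auto
  obtain \<beta> where "0 < \<beta>" "\<beta> \<le> 1" "holder_on \<beta> (\<Phi> ` \<Omega>) (?T A)"
    using assms(13) unfolding pushforward_coeff_def[abs_def] by blast
  then obtain \<phi> where "C1_on (\<Phi> ` \<Omega>) \<phi>" "\<forall>z\<in>\<Phi> ` \<Omega>. \<phi> z \<noteq> 0" "\<forall>z\<in>\<Phi> ` \<Omega>. dzbar \<phi> z = ?T A z * \<phi> z"
    using exists_nonvanishing_dbar_solution[of "\<Phi> ` \<Omega>"] \<open>domain \<Omega>\<close> \<open>bounded (\<Phi> ` \<Omega>)\<close>
    unfolding domain_def by blast
  with gd_step_gauge_zero_A \<open>domain (\<Phi> ` \<Omega>)\<close> \<open>BV (\<Phi> ` \<Omega>) _\<close>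
  have gauge: "gd_step (\<Phi> ` \<Omega>, (\<lambda>_. 0, ?T A, ?T B, ?T F))
      (\<Phi> ` \<Omega>, (\<lambda>_. 0, \<lambda>_. 0, \<lambda>z. ?T B z * \<phi> z / cnj (\<phi> z), \<lambda>z. \<phi> z * ?T F z))"
    by blast
  then have "BV (\<Phi> ` \<Omega>) (\<lambda>_. 0, \<lambda>_. 0, \<lambda>z. ?T B z * \<phi> z / cnj (\<phi> z), \<lambda>z. \<phi> z * ?T F z)"
    unfolding gd_step_def by auto
  moreover have "gd_equiv (\<Omega>, (\<mu>, A, B, F))
      (\<Phi> ` \<Omega>, (\<lambda>_. 0, \<lambda>_. 0, \<lambda>z. ?T B z * \<phi> z / cnj (\<phi> z), \<lambda>z. \<phi> z * ?T F z))"
    unfolding gd_equiv_def using straighten gauge by (meson equivclp_trans r_into_equivclp)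
  ultimately show ?thesis by blast
qed

end
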